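(* Let $s>0$. There exist $\delta=\delta(s)>0$ and $C=C(s)$ such that for all $M\ge1$, $T>0$ and $\omega,\tilde\omega\in C([0,T];\ell^2_s(\mathbb Z))$, $$\|\mathcal N_0[\omega]\|_{C_T\ell^2_s}\le CM^{-\delta}\|\omega\|_{C_T\ell^2_s}^3,\qquad \|\mathcal N_0[\omega]-\mathcal N_0[\tilde\omega]\|_{C_T\ell^2_s}\le CM^{-\delta}\big(\|\omega\|_{C_T\ell^2_s}^2+\|\tilde\omega\|_{C_T\ell^2_s}^2\big)\|\omega-\tilde\omega\|_{C_T\ell^2_s}.$$
   Context: $\langle n\rangle=(1+n^2)^{1/2}$, $\|\omega\|_{\ell^2_s}=\|\langle\cdot\rangle^s\omega\|_{\ell^2}$, $C_T\ell^2_s:=C([0,T];\ell^2_s(\mathbb Z))$ with sup-in-time norm, $\omega^*(n):=\overline{\omega(-n)}$. Notation $n_{ij\ldots}=n_i+n_j+\cdots$, $\hat n:=n-i\mathbf 1_{\{n=0\}}$; for $n=n_{123}$: $m_1:=2i\frac{nn_{23}}{\hat n_1\hat n_2}\mathbf 1_{\{n>0\}}\mathbf 1_{\{n_{23}<0\}}\mathbf 1_{\{n_3\ne0\}}$, $\tilde m_1:=m_1\mathbf 1_{\{n_{12}n_{13}\ne0\}}$, $\Phi:=n|n|-n_1|n_1|-n_2|n_2|-n_3|n_3|$. For $M>0$, $t\in[0,T]$: $$\mathcal N_0[\omega](t,n):=-i\sum_{n=n_{123},\ |\Phi|> M}\frac{e^{it\Phi}\tilde m_1(n,n_1,n_2,n_3)}{\Phi}\,\omega(t,n_1)\omega(t,n_2)\omega^*(t,n_3)\quad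 (n>0),$$ and $\mathcal N_0[\omega](t,n):=0$ for $n\le0$. *)

theory Defs
  imports "HOL-Analysis.Analysis"
begin

definition jbr :: "int \<Rightarrow> real" where
  "jbr n = (1 + (real_of_int n)\<^sup>2) powr (1/2)"

definition in_l2s :: "real \<Rightarrow> (int \<Rightarrow> complex) \<Rightarrow> bool" where
  "in_l2s s f \<longleftrightarrow> (\<lambda>n. (jbr n powr s * cmod (f n))\<^sup>2) summable_on UNIV"

definition l2s_norm :: "real \<Rightarrow> (int \<Rightarrow> complex) \<Rightarrow> real" where
  "l2s_norm s f = sqrt (\<Sum>\<^sub>\<infinity>n. (jbr n powr s * cmod (f n))\<^sup>2)"

definition CT_l2s :: "real \<Rightarrow> real \<Rightarrow> (real \<Rightarrow> int \<Rightarrow> complex) set" where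
  "CT_l2s T s = {w. (\<forall>t\<in>{0..T}. in_l2s s (w t)) \<and>
     (\<forall>t\<in>{0..T}. ((\<lambda>t'. l2s_norm s (\<lambda>n. w t' n - w t n)) \<longlongrightarrow> 0) (at t within {0..T}))}"

definition CT_norm :: "real \<Rightarrow> real \<Rightarrow> (real \<Rightarrow> int \<Rightarrow> complex) \<Rightarrow> real" where
  "CT_norm T s w = (SUP t\<in>{0..T}. l2s_norm s (w t))"

definition hatn :: "int \<Rightarrow> complex" where
  "hatn n = of_int n - (if n = 0 then \<i> else 0)"

text \<open>m_1(n,n1,n2,n3) with n = n1+n2+n3\<close>
definition m1 :: "int \<Rightarrow> int \<Rightarrow> int \<Rightarrow> int \<Rightarrow> complex" where
  "m1 n n1 n2 n3 =
     (if n > 0 \<and> n2 + n3 < 0 \<and> n3 \<noteq> 0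
      then 2 * \<i> * of_int (n * (n2 + n3)) / (hatn n1 * hatn n2) else 0)"

definition m1t :: "int \<Rightarrow> int \<Rightarrow> int \<Rightarrow> int \<Rightarrow> complex" where
  "m1t n n1 n2 n3 = (if (n1 + n2) * (n1 + n3) \<noteq> 0 then m1 n n1 n2 n3 else 0)"

definition Phi :: "int \<Rightarrow> int \<Rightarrow> int \<Rightarrow> int \<Rightarrow> int" where
  "Phi n n1 n2 n3 = n * \<bar>n\<bar> - n1 * \<bar>n1\<bar> - n2 * \<bar>n2\<bar> - n3 * \<bar>n3\<bar>"

definition star :: "(int \<Rightarrow> complex) \<Rightarrow> int \<Rightarrow> complex" where
  "star f n = cnj (f (- n))"

definition N0 :: "real \<Rightarrow> (real \<Rightarrow> int \<Rightarrow> complex) \<Rightarrow> real \<Rightarrow> int \<Rightarrow> complex" where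
  "N0 M w t n =
     (if n > 0 then
        - \<i> * (\<Sum>\<^sub>\<infinity>(n1, n2, n3) \<in> {(n1, n2, n3). n1 + n2 + n3 = n \<and>
                      real_of_int \<bar>Phi n n1 n2 n3\<bar> > M}.
            exp (\<i> * of_real t * of_int (Phi n n1 n2 n3)) * m1t n n1 n2 n3
              / of_int (Phi n n1 n2 n3)
              * w t n1 * w t n2 * star (w t) n3)
      else 0)"

end

theory Submission
  imports Defs
begin

text \<open>
  Writing \<open>(a, b)\<close> for \<open>(n2, n3)\<close>, \<open>N0[\<omega>](t)\<close> is the trilinear convolution
  \<open>\<Sum>(a, b). c(n, a, b) f1(n - a - b) f2(a) f3(b)\<close> applied to \<open>(\<omega>, \<omega>, \<omega>*)\<close>. If
  \<open>|c(n, a, b)| \<langle>n\<rangle>^s \<le> \<kappa>(a, b) \<langle>n - a - b\<rangle>^s \<langle>a\<rangle>^s \<langle>b\<rangle>^s\<close> with \<open>\<kappa>\<close> square summable,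
  Cauchy-Schwarz in \<open>(a, b)\<close> followed by summation over \<open>n\<close> bounds this operator on
  \<open>\<ell>\<^sup>2_s\<close> by the \<open>\<ell>\<^sup>2\<close> norm of \<open>\<kappa>\<close>.

  On the support of \<open>m1\<close> the resonance function \<open>\<Phi>\<close> factorises in each sign pattern of
  \<open>(a, b)\<close>, and an elementary case analysis gives \<open>|m1|/|\<Phi>| \<le> 2/n1\<close>,
  \<open>(|m1|/|\<Phi>|)\<^sup>2 \<langle>a\<rangle>\<langle>b\<rangle> \<le> 64\<close> and \<open>|\<Phi>| \<le> 4 n1\<^sup>2 \<langle>a\<rangle>\<^sup>2\<langle>b\<rangle>\<^sup>2\<close>. Interpolating
  between them with \<open>\<delta> = min(s, 1)/4\<close> gives
  \<open>|m1| |\<Phi>|^(\<delta> - 1) \<langle>n\<rangle>^s \<le> C \<langle>n1\<rangle>^s \<langle>a\<rangle>^s \<langle>b\<rangle>^s (\<langle>a\<rangle>\<langle>b\<rangle>)^(-1/2 - \<delta>)\<close>,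
  a square summable weight, and the restriction \<open>|\<Phi>| > M\<close> gains \<open>M^(-\<delta>)\<close>.
  The difference estimate follows by trilinearity, and continuity in time from
  \<open>|e^(it\<Phi>) - e^(it'\<Phi>)| \<le> 2 |t - t'|^\<delta> |\<Phi>|^\<delta>\<close>.
\<close>

section \<open>Weighted sequence spaces\<close>

lemma jbr_eq_sqrt: "jbr n = sqrt (1 + (real_of_int n)\<^sup>2)"
  unfolding jbr_def by (simp add: powr_half_sqrt add_pos_nonneg)

lemma jbr_ge_1: "jbr n \<ge> 1"
  unfolding jbr_eq_sqrt by simp

lemma jbr_pos: "jbr n > 0"
  using jbr_ge_1[of n] by linarith

lemma power2_jbr: "(jbr n)\<^sup>2 = 1 + (real_of_int n)\<^sup>2"
  unfolding jbr_eq_sqrt by simp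

lemma jbr_minus: "jbr (- n) = jbr n"
  unfolding jbr_eq_sqrt by simp

lemma jbr_le_1_plus_abs: "jbr n \<le> 1 + \<bar>real_of_int n\<bar>"
  unfolding jbr_eq_sqrt by (rule real_le_lsqrt) (auto simp: power2_eq_square algebra_simps)

lemma one_plus_abs_le_jbr: "1 + \<bar>real_of_int n\<bar> \<le> sqrt 2 * jbr n"
proof -
  have "(1 + \<bar>real_of_int n\<bar>)\<^sup>2 \<le> 2 * (1 + (real_of_int n)\<^sup>2)"
    using sum_squares_ge_zero[of "1 - \<bar>real_of_int n\<bar>" 0]
    by (simp add: power2_eq_square algebra_simps)
  then show ?thesis
    unfolding jbr_eq_sqrt real_sqrt_mult[symmetric] by (rule real_le_rsqrt)
qed

lemma jbr_powr_mono: "\<bar>m\<bar> \<le> \<bar>n\<bar> \<Longrightarrow> s \<ge> 0 \<Longrightarrow> jbr m powr s \<le> jbr n powr s"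
  unfolding jbr_eq_sqrt
  by (intro powr_mono2) (auto simp: abs_le_square_iff[symmetric] simp flip: of_int_abs)

lemma summable_on_jbr_powr:
  assumes p: "p > 1"
  shows "(\<lambda>n::int. jbr n powr (-p)) summable_on UNIV"
proof -
  define h where "h = (\<lambda>n::int. sqrt 2 powr p * (1 + \<bar>real_of_int n\<bar>) powr (-p))"
  have le: "jbr n powr (-p) \<le> h n" for n
  proof -
    have "(1 + \<bar>real_of_int n\<bar>) powr p \<le> (sqrt 2 * jbr n) powr p"
      using one_plus_abs_le_jbr[of n] p by (intro powr_mono2) auto
    then show ?thesis
      unfolding h_def using jbr_pos[of n] by (simp add: powr_mult powr_minus field_simps)
  qed
  have nat: "(\<lambda>k::nat. (1 + real k) powr (-p)) summable_on UNIV"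
    using summable_real_powr_iff[of "-p"] p summable_Suc_iff[of "\<lambda>k. real k powr (-p)"]
    by (subst summable_on_UNIV_nonneg_real_iff) (simp_all add: add.commute)
  have nonneg_ints: "h summable_on int ` UNIV"
    by (subst summable_on_reindex) (use nat in \<open>simp_all add: h_def o_def summable_on_cmult_right\<close>)
  have neg_ints: "h summable_on (\<lambda>k. - int (Suc k)) ` UNIV"
  proof (subst summable_on_reindex)
    have "(\<lambda>k::nat. (2 + real k) powr (-p)) summable_on UNIV"
      by (rule summable_on_comparison_test[OF nat]) (use p in \<open>auto intro: powr_mono2'\<close>)
    then show "(h \<circ> (\<lambda>k. - int (Suc k))) summable_on UNIV"
      unfolding h_def o_def by (intro summable_on_cmult_right) (simp add: add.commute)
  qed (auto simp: inj_on_def)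
  have "n \<in> int ` UNIV \<union> (\<lambda>k. - int (Suc k)) ` UNIV" for n
    by (cases n rule: int_cases) auto
  then have "(UNIV :: int set) = int ` UNIV \<union> (\<lambda>k. - int (Suc k)) ` UNIV"
    by auto
  moreover have "int ` UNIV \<inter> (\<lambda>k. - int (Suc k)) ` UNIV = {}"
    by auto
  ultimately have "h summable_on UNIV"
    using summable_on_Un_disjoint[OF nonneg_ints neg_ints] by metis
  then show ?thesis
    by (rule summable_on_comparison_test) (auto simp: le)
qed

lemma infsum_mult_le_sqrt_infsum:
  fixes x y :: "'a \<Rightarrow> real"
  assumes x: "(\<lambda>a. (x a)\<^sup>2) summable_on A" and y: "(\<lambda>a. (y a)\<^sup>2) summable_on A"
  shows "(\<lambda>a. x a * y a) summable_on A"
    and "(\<Sum>\<^sub>\<infinity>a\<in>A. x a * y a) \<le> sqrt (\<Sum>\<^sub>\<infinity>a\<in>A. (x a)\<^sup>2) * sqrt (\<Sum>\<^sub>\<infinity>a\<in>A. (y a)\<^sup>2)"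
proof -
  have "(\<lambda>a. norm (x a * y a)) summable_on A"
    by (rule abs_summable_product) (use x y in \<open>simp_all add: power2_eq_square abs_mult_self_eq\<close>)
  then show xy: "(\<lambda>a. x a * y a) summable_on A"
    by (rule abs_summable_summable)
  show "(\<Sum>\<^sub>\<infinity>a\<in>A. x a * y a) \<le> sqrt (\<Sum>\<^sub>\<infinity>a\<in>A. (x a)\<^sup>2) * sqrt (\<Sum>\<^sub>\<infinity>a\<in>A. (y a)\<^sup>2)"
  proof (rule infsum_le_finite_sums[OF xy])
    fix F assume F: "finite F" "F \<subseteq> A"
    have "(\<Sum>a\<in>F. x a * y a) \<le> sqrt ((\<Sum>a\<in>F. x a * y a)\<^sup>2)"
      by simp
    also have "\<dots> \<le> sqrt ((\<Sum>a\<in>F. (x a)\<^sup>2) * (\<Sum>a\<in>F. (y a)\<^sup>2))"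
      by (rule real_sqrt_le_mono, rule Cauchy_Schwarz_ineq_sum)
    also have "\<dots> \<le> sqrt ((\<Sum>\<^sub>\<infinity>a\<in>A. (x a)\<^sup>2) * (\<Sum>\<^sub>\<infinity>a\<in>A. (y a)\<^sup>2))"
      using F x y
      by (intro real_sqrt_le_mono mult_mono finite_sum_le_infsum sum_nonneg infsum_nonneg) auto
    finally show "(\<Sum>a\<in>F. x a * y a) \<le> sqrt (\<Sum>\<^sub>\<infinity>a\<in>A. (x a)\<^sup>2) * sqrt (\<Sum>\<^sub>\<infinity>a\<in>A. (y a)\<^sup>2)"
      by (simp add: real_sqrt_mult)
  qed
qed

definition wabs :: "real \<Rightarrow> (int \<Rightarrow> complex) \<Rightarrow> int \<Rightarrow> real" where
  "wabs s f n = jbr n powr s * cmod (f n)"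

lemma wabs_nonneg: "wabs s f n \<ge> 0"
  unfolding wabs_def by simp

lemma in_l2s_iff_wabs: "in_l2s s f \<longleftrightarrow> (\<lambda>n. (wabs s f n)\<^sup>2) summable_on UNIV"
  unfolding in_l2s_def wabs_def ..

lemma l2s_norm_eq_wabs: "l2s_norm s f = sqrt (\<Sum>\<^sub>\<infinity>n. (wabs s f n)\<^sup>2)"
  unfolding l2s_norm_def wabs_def ..

lemma l2s_norm_nonneg: "l2s_norm s f \<ge> 0"
  unfolding l2s_norm_eq_wabs by (simp add: infsum_nonneg)

lemma power2_l2s_norm: "(l2s_norm s f)\<^sup>2 = (\<Sum>\<^sub>\<infinity>n. (wabs s f n)\<^sup>2)"
  unfolding l2s_norm_eq_wabs by (simp add: infsum_nonneg)

lemma l2s_add: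
  assumes f: "in_l2s s f" and g: "in_l2s s g"
  shows "in_l2s s (\<lambda>n. f n + g n)"
    and "l2s_norm s (\<lambda>n. f n + g n) \<le> l2s_norm s f + l2s_norm s g"
proof -
  let ?a = "wabs s f" and ?b = "wabs s g" and ?c = "wabs s (\<lambda>n. f n + g n)"
  have sa: "(\<lambda>n. (?a n)\<^sup>2) summable_on UNIV" and sb: "(\<lambda>n. (?b n)\<^sup>2) summable_on UNIV"
    using f g by (simp_all add: in_l2s_iff_wabs)
  note cs = infsum_mult_le_sqrt_infsum[OF sa sb]
  have sab: "(\<lambda>n. 2 * (?a n * ?b n)) summable_on UNIV"
    using cs(1) by (rule summable_on_cmult_right)
  have ss: "(\<lambda>n. (?a n)\<^sup>2 + 2 * (?a n * ?b n) + (?b n)\<^sup>2) summable_on UNIV"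
    by (intro summable_on_add sa sb sab)
  have le: "(?c n)\<^sup>2 \<le> (?a n)\<^sup>2 + 2 * (?a n * ?b n) + (?b n)\<^sup>2" for n
  proof -
    have "?c n \<le> ?a n + ?b n"
      unfolding wabs_def by (metis distrib_left mult_left_mono norm_triangle_ineq powr_ge_zero)
    then have "(?c n)\<^sup>2 \<le> (?a n + ?b n)\<^sup>2"
      using wabs_nonneg by (rule power_mono)
    then show ?thesis by (simp add: power2_sum)
  qed
  show fg: "in_l2s s (\<lambda>n. f n + g n)"
    unfolding in_l2s_iff_wabs by (rule summable_on_comparison_test[OF ss]) (auto simp: le)
  have "(l2s_norm s (\<lambda>n. f n + g n))\<^sup>2 \<le> (\<Sum>\<^sub>\<infinity>n. (?a n)\<^sup>2 + 2 * (?a n * ?b n) + (?b n)\<^sup>2)"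
    unfolding power2_l2s_norm
    by (rule infsum_mono) (use fg ss le in \<open>auto simp: in_l2s_iff_wabs\<close>)
  also have "\<dots> = (\<Sum>\<^sub>\<infinity>n. (?a n)\<^sup>2) + 2 * (\<Sum>\<^sub>\<infinity>n. ?a n * ?b n) + (\<Sum>\<^sub>\<infinity>n. (?b n)\<^sup>2)"
    by (simp add: infsum_add summable_on_add sa sb sab cs(1) infsum_cmult_right')
  also have "\<dots> \<le> (l2s_norm s f)\<^sup>2 + 2 * (l2s_norm s f * l2s_norm s g) + (l2s_norm s g)\<^sup>2"
    using cs(2) unfolding l2s_norm_eq_wabs by (simp add: infsum_nonneg)
  also have "\<dots> = (l2s_norm s f + l2s_norm s g)\<^sup>2"
    by (simp add: power2_sum)
  finally show "l2s_norm s (\<lambda>n. f n + g n) \<le> l2s_norm s f + l2s_norm s g"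
    by (rule power2_le_imp_le) (simp add: l2s_norm_nonneg)
qed

lemma l2s_uminus [simp]:
  "in_l2s s (\<lambda>n. - f n) \<longleftrightarrow> in_l2s s f" "l2s_norm s (\<lambda>n. - f n) = l2s_norm s f"
  unfolding in_l2s_def l2s_norm_def by simp_all

lemma l2s_diff:
  assumes "in_l2s s f" "in_l2s s g"
  shows "in_l2s s (\<lambda>n. f n - g n)"
    and "l2s_norm s (\<lambda>n. f n - g n) \<le> l2s_norm s f + l2s_norm s g"
  using l2s_add[of s f "\<lambda>n. - g n"] assms by simp_all

lemma l2s_norm_diff_commute: "l2s_norm s (\<lambda>n. f n - g n) = l2s_norm s (\<lambda>n. g n - f n)"
  using l2s_uminus(2)[of s "\<lambda>n. f n - g n"] by simp

lemma abs_l2s_norm_diff_le: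
  assumes "in_l2s s f" "in_l2s s g"
  shows "\<bar>l2s_norm s f - l2s_norm s g\<bar> \<le> l2s_norm s (\<lambda>n. f n - g n)"
  using l2s_add(2)[of s "\<lambda>n. f n - g n" g] l2s_add(2)[of s "\<lambda>n. g n - f n" f]
    l2s_diff(1) assms l2s_norm_diff_commute[of s f g]
  by force

lemma l2s_star [simp]: "in_l2s s (star f) \<longleftrightarrow> in_l2s s f" "l2s_norm s (star f) = l2s_norm s f"
proof -
  have b: "bij_betw uminus (UNIV::int set) UNIV"
    by (rule bij_betwI[of _ _ _ uminus]) auto
  have e: "(\<lambda>n. (jbr n powr s * cmod (star f n))\<^sup>2) = (\<lambda>n. (jbr n powr s * cmod (f n))\<^sup>2) \<circ> uminus"
    by (simp add: star_def jbr_minus o_def)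
  show "in_l2s s (star f) \<longleftrightarrow> in_l2s s f"
    unfolding in_l2s_def e
    using summable_on_reindex_bij_betw[OF b, of "\<lambda>n. (jbr n powr s * cmod (f n))\<^sup>2"]
    by (simp add: o_def)
  show "l2s_norm s (star f) = l2s_norm s f"
    unfolding l2s_norm_def e
    using infsum_reindex_bij_betw[OF b, of "\<lambda>n. (jbr n powr s * cmod (f n))\<^sup>2"]
    by (simp add: o_def)
qed

lemma star_diff: "star (\<lambda>n. f n - g n) = (\<lambda>n. star f n - star g n)"
  unfolding star_def by auto

section \<open>Trilinear convolution operators\<close>

lemma has_sum_product_nonneg:
  fixes f :: "'a \<Rightarrow> real" and g :: "'b \<Rightarrow> real"
  assumes "\<And>x. f x \<ge> 0" "\<And>y. g y \<ge> 0" "f summable_on UNIV" "g summable_on UNIV"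
  shows "((\<lambda>(x, y). f x * g y) has_sum (\<Sum>\<^sub>\<infinity>x. f x) * (\<Sum>\<^sub>\<infinity>y. g y)) UNIV"
proof -
  have row: "((\<lambda>y. f x * g y) has_sum f x * (\<Sum>\<^sub>\<infinity>y. g y)) UNIV" for x
    by (rule has_sum_cmult_right) (use assms in \<open>simp add: has_sum_infsum\<close>)
  have col: "((\<lambda>x. f x * (\<Sum>\<^sub>\<infinity>y. g y)) has_sum (\<Sum>\<^sub>\<infinity>x. f x) * (\<Sum>\<^sub>\<infinity>y. g y)) UNIV"
    by (rule has_sum_cmult_left) (use assms in \<open>simp add: has_sum_infsum\<close>)
  have summable: "(\<lambda>(x, y). f x * g y) summable_on UNIV \<times> UNIV"
    by (rule summable_on_SigmaI[where g="\<lambda>x. f x * (\<Sum>\<^sub>\<infinity>y. g y)"])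
       (use row col assms in \<open>auto intro: has_sum_imp_summable\<close>)
  have "((\<lambda>(x, y). f x * g y) has_sum (\<Sum>\<^sub>\<infinity>x. f x) * (\<Sum>\<^sub>\<infinity>y. g y)) (UNIV \<times> UNIV)"
    by (rule has_sum_SigmaI[OF _ col summable]) (use row in simp)
  then show ?thesis by simp
qed

lemma has_sum_convolution3:
  fixes g1 g2 g3 :: "int \<Rightarrow> real"
  assumes "\<And>k. g1 k \<ge> 0" "\<And>k. g2 k \<ge> 0" "\<And>k. g3 k \<ge> 0"
    and "g1 summable_on UNIV" "g2 summable_on UNIV" "g3 summable_on UNIV"
  shows "((\<lambda>(n, a, b). g1 (n - a - b) * (g2 a * g3 b))
           has_sum (\<Sum>\<^sub>\<infinity>k. g1 k) * ((\<Sum>\<^sub>\<infinity>k. g2 k) * (\<Sum>\<^sub>\<infinity>k. g3 k))) UNIV"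
proof -
  have "((\<lambda>(a, b). g2 a * g3 b) has_sum (\<Sum>\<^sub>\<infinity>k. g2 k) * (\<Sum>\<^sub>\<infinity>k. g3 k)) UNIV"
    by (rule has_sum_product_nonneg) (use assms in auto)
  then have "((\<lambda>(x, ab). g1 x * (\<lambda>(a, b). g2 a * g3 b) ab)
      has_sum (\<Sum>\<^sub>\<infinity>k. g1 k) * ((\<Sum>\<^sub>\<infinity>k. g2 k) * (\<Sum>\<^sub>\<infinity>k. g3 k))) UNIV"
    using has_sum_product_nonneg[of g1 "\<lambda>(a, b). g2 a * g3 b"] assms
    by (auto simp: case_prod_unfold infsumI intro: has_sum_imp_summable)
  then show ?thesis
    by (subst has_sum_reindex_bij_witness[where i="\<lambda>(x, a, b). (x + a + b, a, b)"
          and j="\<lambda>(n, a, b). (n - a - b, a, b)" and T=UNIV]) auto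
qed

definition trilin :: "(int \<Rightarrow> int \<Rightarrow> int \<Rightarrow> complex) \<Rightarrow> (int \<Rightarrow> complex) \<Rightarrow> (int \<Rightarrow> complex)
    \<Rightarrow> (int \<Rightarrow> complex) \<Rightarrow> int \<Rightarrow> complex" where
  "trilin c f1 f2 f3 n = (\<Sum>\<^sub>\<infinity>(a, b). c n a b * f1 (n - a - b) * f2 a * f3 b)"

lemma has_sum_wabs_convolution3:
  assumes "in_l2s s f1" "in_l2s s f2" "in_l2s s f3"
  shows "((\<lambda>(n, a, b). (wabs s f1 (n - a - b) * (wabs s f2 a * wabs s f3 b))\<^sup>2)
           has_sum (l2s_norm s f1 * (l2s_norm s f2 * l2s_norm s f3))\<^sup>2) UNIV"
  using has_sum_convolution3[of "\<lambda>k. (wabs s f1 k)\<^sup>2" "\<lambda>k. (wabs s f2 k)\<^sup>2" "\<lambda>k. (wabs s f3 k)\<^sup>2"] assms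
  by (simp add: in_l2s_iff_wabs power2_l2s_norm power_mult_distrib)

lemma trilin_wabs_le:
  fixes c :: "int \<Rightarrow> int \<Rightarrow> int \<Rightarrow> complex" and \<kappa> :: "int \<Rightarrow> int \<Rightarrow> real"
  assumes \<kappa>: "((\<lambda>(a, b). (\<kappa> a b)\<^sup>2) has_sum K) UNIV"
    and c: "\<And>a b. cmod (c n a b) * jbr n powr s
                    \<le> \<kappa> a b * (jbr (n - a - b) powr s * (jbr a powr s * jbr b powr s))"
    and h: "(\<lambda>(a, b). (wabs s f1 (n - a - b) * (wabs s f2 a * wabs s f3 b))\<^sup>2) summable_on UNIV"
  shows "(\<lambda>(a, b). c n a b * f1 (n - a - b) * f2 a * f3 b) summable_on UNIV"
    and "wabs s (trilin c f1 f2 f3) n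
           \<le> sqrt K * sqrt (\<Sum>\<^sub>\<infinity>(a, b). (wabs s f1 (n - a - b) * (wabs s f2 a * wabs s f3 b))\<^sup>2)"
proof -
  define T where "T = (\<lambda>(a, b). c n a b * f1 (n - a - b) * f2 a * f3 b)"
  define h where "h = (\<lambda>(a, b). wabs s f1 (n - a - b) * (wabs s f2 a * wabs s f3 b))"
  define k where "k = (\<lambda>(a, b). \<kappa> a b)"
  have k2: "(\<lambda>ab. (k ab)\<^sup>2) summable_on UNIV" "(\<Sum>\<^sub>\<infinity>ab. (k ab)\<^sup>2) = K"
    using \<kappa> by (auto simp: k_def case_prod_unfold intro: has_sum_imp_summable infsumI)
  have h2: "(\<lambda>ab. (h ab)\<^sup>2) summable_on UNIV"
    using h by (simp add: h_def case_prod_unfold)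
  note cs = infsum_mult_le_sqrt_infsum[OF k2(1) h2]
  have T_le: "cmod (T ab) \<le> k ab * h ab / jbr n powr s" for ab
  proof -
    obtain a b where ab: "ab = (a, b)" by fastforce
    have "cmod (T ab) * jbr n powr s
        = (cmod (c n a b) * jbr n powr s) * (cmod (f1 (n - a - b)) * cmod (f2 a) * cmod (f3 b))"
      unfolding T_def ab by (simp add: norm_mult)
    also have "\<dots> \<le> (\<kappa> a b * (jbr (n - a - b) powr s * (jbr a powr s * jbr b powr s)))
        * (cmod (f1 (n - a - b)) * cmod (f2 a) * cmod (f3 b))"
      by (rule mult_right_mono[OF c]) simp
    also have "\<dots> = k ab * h ab"
      unfolding k_def h_def ab wabs_def by simp
    finally show ?thesis
      using jbr_pos[of n] by (simp add: field_simps)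
  qed
  have kh: "((\<lambda>ab. k ab * h ab / jbr n powr s) has_sum (\<Sum>\<^sub>\<infinity>ab. k ab * h ab) / jbr n powr s) UNIV"
    using has_sum_cmult_left[OF has_sum_infsum[OF cs(1)], of "1 / jbr n powr s"] by simp
  have "(\<lambda>ab. norm (T ab)) summable_on UNIV"
    by (rule Infinite_Sum.abs_summable_on_comparison_test'[OF has_sum_imp_summable[OF kh]]) (use T_le in auto)
  then have T: "T summable_on UNIV"
    by (rule abs_summable_summable)
  then show "(\<lambda>(a, b). c n a b * f1 (n - a - b) * f2 a * f3 b) summable_on UNIV"
    unfolding T_def .
  have "cmod (trilin c f1 f2 f3 n) \<le> (\<Sum>\<^sub>\<infinity>ab. k ab * h ab) / jbr n powr s"
    unfolding trilin_def T_def[symmetric]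
    by (rule norm_infsum_le[OF has_sum_infsum[OF T] kh]) (use T_le in auto)
  also have "\<dots> \<le> sqrt K * sqrt (\<Sum>\<^sub>\<infinity>ab. (h ab)\<^sup>2) / jbr n powr s"
    using cs(2) k2(2) by (simp add: divide_right_mono)
  finally show "wabs s (trilin c f1 f2 f3) n
      \<le> sqrt K * sqrt (\<Sum>\<^sub>\<infinity>(a, b). (wabs s f1 (n - a - b) * (wabs s f2 a * wabs s f3 b))\<^sup>2)"
    unfolding wabs_def h_def using jbr_pos[of n] by (simp add: field_simps case_prod_unfold)
qed

theorem trilin_bound:
  fixes c :: "int \<Rightarrow> int \<Rightarrow> int \<Rightarrow> complex" and \<kappa> :: "int \<Rightarrow> int \<Rightarrow> real"
  assumes \<kappa>: "((\<lambda>(a, b). (\<kappa> a b)\<^sup>2) has_sum K) UNIV"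
    and c: "\<And>n a b. cmod (c n a b) * jbr n powr s
                      \<le> \<kappa> a b * (jbr (n - a - b) powr s * (jbr a powr s * jbr b powr s))"
    and f: "in_l2s s f1" "in_l2s s f2" "in_l2s s f3"
  shows "(\<lambda>(a, b). c n a b * f1 (n - a - b) * f2 a * f3 b) summable_on UNIV"
    and "in_l2s s (trilin c f1 f2 f3)"
    and "l2s_norm s (trilin c f1 f2 f3) \<le> sqrt K * (l2s_norm s f1 * (l2s_norm s f2 * l2s_norm s f3))"
proof -
  define G where "G = (l2s_norm s f1 * (l2s_norm s f2 * l2s_norm s f3))\<^sup>2"
  define h where "h = (\<lambda>m. \<lambda>(a, b). (wabs s f1 (m - a - b) * (wabs s f2 a * wabs s f3 b))\<^sup>2)"
  have K: "K \<ge> 0"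
    using \<kappa> by (rule has_sum_nonneg) (simp add: case_prod_beta)
  have hG: "((\<lambda>(n, ab). h n ab) has_sum G) (UNIV \<times> UNIV)"
    using has_sum_wabs_convolution3[OF f] by (simp add: G_def h_def case_prod_unfold)
  have hn: "h n summable_on UNIV" for n
    using summable_on_SigmaD1[OF has_sum_imp_summable[OF hG]] by simp
  show "(\<lambda>(a, b). c n a b * f1 (n - a - b) * f2 a * f3 b) summable_on UNIV"
    by (rule trilin_wabs_le(1)[where c=c and n=n, OF \<kappa> c[of n] hn[of n, unfolded h_def]])
  have "((\<lambda>n. infsum (h n) UNIV) has_sum G) UNIV"
    by (rule has_sum_SigmaD[OF hG]) (use hn in \<open>auto intro: has_sum_infsum\<close>)
  then have KG: "((\<lambda>n. K * infsum (h n) UNIV) has_sum K * G) UNIV"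
    by (rule has_sum_cmult_right)
  have le: "(wabs s (trilin c f1 f2 f3) n)\<^sup>2 \<le> K * infsum (h n) UNIV" for n
  proof -
    have "(wabs s (trilin c f1 f2 f3) n)\<^sup>2 \<le> (sqrt K * sqrt (infsum (h n) UNIV))\<^sup>2"
      using trilin_wabs_le(2)[where c=c and n=n, OF \<kappa> c[of n] hn[of n, unfolded h_def]] wabs_nonneg
      by (simp add: h_def power_mono)
    then show ?thesis
      using K by (simp add: power_mult_distrib h_def infsum_nonneg case_prod_unfold)
  qed
  show tl: "in_l2s s (trilin c f1 f2 f3)"
    unfolding in_l2s_iff_wabs
    by (rule summable_on_comparison_test[OF has_sum_imp_summable[OF KG]]) (use le in auto)
  have "(l2s_norm s (trilin c f1 f2 f3))\<^sup>2 \<le> K * G"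
    unfolding power2_l2s_norm infsumI[OF KG, symmetric]
    by (rule infsum_mono) (use tl le has_sum_imp_summable[OF KG] in \<open>auto simp: in_l2s_iff_wabs\<close>)
  also have "\<dots> = (sqrt K * (l2s_norm s f1 * (l2s_norm s f2 * l2s_norm s f3)))\<^sup>2"
    using K by (simp add: G_def power_mult_distrib)
  finally show "l2s_norm s (trilin c f1 f2 f3) \<le> sqrt K * (l2s_norm s f1 * (l2s_norm s f2 * l2s_norm s f3))"
    by (rule power2_le_imp_le) (use K in \<open>simp add: l2s_norm_nonneg\<close>)
qed

lemma infsum_diff:
  fixes f g :: "'a \<Rightarrow> 'b::{topological_ab_group_add, t2_space}"
  assumes "f summable_on A" "g summable_on A"
  shows "(\<Sum>\<^sub>\<infinity>x\<in>A. f x - g x) = infsum f A - infsum g A"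
  using infsum_add[OF assms(1) summable_on_uminus[THEN iffD2, OF assms(2)]] infsum_uminus[of g A]
  by simp

lemma trilin_diff:
  assumes "(\<lambda>(a, b). c n a b * u1 (n - a - b) * u2 a * u3 b) summable_on UNIV"
    and "(\<lambda>(a, b). c n a b * v1 (n - a - b) * v2 a * v3 b) summable_on UNIV"
    and "(\<lambda>(a, b). c n a b * (u1 (n - a - b) - v1 (n - a - b)) * u2 a * u3 b) summable_on UNIV"
    and "(\<lambda>(a, b). c n a b * v1 (n - a - b) * (u2 a - v2 a) * u3 b) summable_on UNIV"
    and "(\<lambda>(a, b). c n a b * v1 (n - a - b) * v2 a * (u3 b - v3 b)) summable_on UNIV"
  shows "trilin c u1 u2 u3 n - trilin c v1 v2 v3 n
           = trilin c (\<lambda>k. u1 k - v1 k) u2 u3 n + trilin c v1 (\<lambda>k. u2 k - v2 k) u3 n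
             + trilin c v1 v2 (\<lambda>k. u3 k - v3 k) n"
proof -
  have "trilin c u1 u2 u3 n - trilin c v1 v2 v3 n
      = (\<Sum>\<^sub>\<infinity>(a, b). c n a b * u1 (n - a - b) * u2 a * u3 b - c n a b * v1 (n - a - b) * v2 a * v3 b)"
    unfolding trilin_def using infsum_diff[OF assms(1,2)] by (simp add: case_prod_unfold)
  also have "\<dots> = (\<Sum>\<^sub>\<infinity>(a, b). c n a b * (u1 (n - a - b) - v1 (n - a - b)) * u2 a * u3 b
      + c n a b * v1 (n - a - b) * (u2 a - v2 a) * u3 b + c n a b * v1 (n - a - b) * v2 a * (u3 b - v3 b))"
    by (rule infsum_cong) (simp add: case_prod_beta algebra_simps)
  also have "\<dots> = trilin c (\<lambda>k. u1 k - v1 k) u2 u3 n + trilin c v1 (\<lambda>k. u2 k - v2 k) u3 n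
      + trilin c v1 v2 (\<lambda>k. u3 k - v3 k) n"
    unfolding trilin_def using assms(3-5)
    by (simp add: infsum_add summable_on_add case_prod_unfold)
  finally show ?thesis .
qed

section \<open>The resonance function on the support of the multiplier\<close>

lemma resonance_size_bound:
  fixes n a b :: int
  assumes n: "n > 0" and ab: "a + b < 0"
  shows "\<bar>Phi n (n - a - b) a b\<bar> \<le> 4 * ((n - a - b)\<^sup>2 * ((1 + a\<^sup>2) * (1 + b\<^sup>2)))"
proof -
  define n1 where "n1 = n - a - b"
  define X where "X = n1\<^sup>2 * ((1 + a\<^sup>2) * (1 + b\<^sup>2))"
  have n1: "n < n1" unfolding n1_def using ab by linarith
  have "1 \<le> n1\<^sup>2" "1 \<le> 1 + a\<^sup>2" "1 \<le> 1 + b\<^sup>2"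
    using n n1 by (simp_all add: power2_ge_1_iff)
  then have "n1\<^sup>2 * (1 * 1) \<le> X" "1 * ((1 + a\<^sup>2) * 1) \<le> X" "1 * (1 * (1 + b\<^sup>2)) \<le> X"
    unfolding X_def by (intro mult_mono; simp)+
  moreover have "n\<^sup>2 \<le> n1\<^sup>2"
    using n n1 by (intro power_mono) auto
  moreover have "\<bar>Phi n n1 a b\<bar> \<le> n\<^sup>2 + n1\<^sup>2 + a\<^sup>2 + b\<^sup>2"
  proof -
    have "\<bar>x * \<bar>x\<bar>\<bar> = x\<^sup>2" for x :: int
      by (simp add: abs_mult power2_eq_square)
    then show ?thesis
      unfolding Phi_def by (smt (verit))
  qed
  ultimately show ?thesis
    unfolding X_def n1_def by simp
qed

text \<open>
  Since \<open>|m1| = 2 Q / (n1 max 1 |a|)\<close> (see \<open>cmod_m1t\<close>), the conclusions of the three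
  case lemmas below are the bounds \<open>|m1|/|\<Phi>| \<le> 2/n1\<close> and
  \<open>(|m1|/|\<Phi>|)\<^sup>2 (1 + |a|)(1 + |b|) \<le> 64\<close> with denominators cleared.
\<close>

lemma resonance_bounds_nonpos_neg:
  fixes n a b :: int
  assumes n: "n > 0" and a: "a \<le> 0" and b: "b < 0"
  defines "P \<equiv> \<bar>Phi n (n - a - b) a b\<bar>" and "Q \<equiv> n * \<bar>a + b\<bar>"
  shows "P > 0" "Q \<le> P * max 1 \<bar>a\<bar>"
    "4 * Q\<^sup>2 * ((1 + \<bar>a\<bar>) * (1 + \<bar>b\<bar>)) \<le> 64 * (P\<^sup>2 * (n - a - b)\<^sup>2 * (max 1 \<bar>a\<bar>)\<^sup>2)"
proof -
  define h where "h = max 1 \<bar>a\<bar>"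
  define n1 where "n1 = n - a - b"
  have ab: "a * b \<ge> 0"
    using a b by (simp add: mult_nonpos_nonpos)
  have Q: "Q = - (n * (a + b))" "Q > 0"
    unfolding Q_def using n a b by (simp add: algebra_simps, simp add: zero_less_mult_iff)
  have "Phi n (n - a - b) a b = 2 * (n * (a + b)) - 2 * (a * b)"
    unfolding Phi_def using n a b
    by (simp add: abs_of_nonpos abs_of_neg abs_of_pos power2_eq_square algebra_simps)
  moreover have "n * (a + b) < 0"
    using n a b by (simp add: mult_pos_neg)
  ultimately have P: "P = 2 * Q + 2 * (a * b)"
    unfolding P_def Q(1) using ab by simp
  show "P > 0"
    using P Q ab by linarith
  have h: "1 \<le> h" "1 + \<bar>a\<bar> \<le> 2 * h"
    unfolding h_def by auto
  have n1: "1 + \<bar>b\<bar> \<le> n1" "1 \<le> n1"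
    unfolding n1_def using n a b by linarith+
  show "Q \<le> P * max 1 \<bar>a\<bar>"
    using P Q ab h(1) mult_left_mono[OF h(1), of P] unfolding h_def by linarith
  have "4 * Q\<^sup>2 = (2 * Q)\<^sup>2"
    by (simp add: power_mult_distrib)
  also have "\<dots> \<le> P\<^sup>2"
    using P Q ab by (intro power_mono) auto
  finally have "4 * Q\<^sup>2 * ((1 + \<bar>a\<bar>) * (1 + \<bar>b\<bar>)) \<le> P\<^sup>2 * ((2 * h) * n1)"
    using h n1 by (intro mult_mono mult_mono') auto
  also have "\<dots> \<le> P\<^sup>2 * (64 * (n1\<^sup>2 * h\<^sup>2))"
  proof (rule mult_left_mono)
    have "2 * h * n1 \<le> 64 * (h * h) * (n1 * n1)"
      using h n1 by (intro mult_mono) auto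
    then show "2 * h * n1 \<le> 64 * (n1\<^sup>2 * h\<^sup>2)"
      by (simp add: power2_eq_square ac_simps)
  qed simp
  finally show "4 * Q\<^sup>2 * ((1 + \<bar>a\<bar>) * (1 + \<bar>b\<bar>)) \<le> 64 * (P\<^sup>2 * (n - a - b)\<^sup>2 * (max 1 \<bar>a\<bar>)\<^sup>2)"
    unfolding h_def n1_def by (simp add: ac_simps)
qed

lemma le_two_mult_abs_diff:
  fixes n a :: int
  assumes "n > 0" "a > 0" "n \<noteq> a"
  shows "n \<le> 2 * a * \<bar>n - a\<bar>"
  using assms by (smt (verit, ccfv_SIG) mult_le_cancel_left1 mult_le_cancel_right1
    mult_le_cancel_right2 mult_less_cancel_right1 right_diff_distrib')

lemma resonance_pos_neg_far:
  fixes n a d :: int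
  assumes n: "n > 0" and a: "2 * n \<le> a" and d: "d \<ge> 1"
  shows "n\<^sup>2 * ((1 + a) * (1 + a + d)) \<le> 64 * ((n - a)\<^sup>2 * (n + d)\<^sup>2 * a\<^sup>2)"
proof -
  have "a \<le> 2 * \<bar>n - a\<bar>"
    using a n by arith
  then have "a\<^sup>2 \<le> (2 * \<bar>n - a\<bar>)\<^sup>2"
    using a n by (intro power_mono) auto
  then have 1: "a\<^sup>2 \<le> 4 * (n - a)\<^sup>2"
    by (simp add: power_mult_distrib)
  have 2: "n\<^sup>2 \<le> a\<^sup>2"
    using a n by (intro power_mono) auto
  have "1 * (n + d) \<le> a * (n + d)" "a * 1 \<le> a * (n + d)"
    using a n d by (intro mult_right_mono mult_left_mono; simp)+
  then have "1 + a + d \<le> 2 * (a * (n + d))"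
    using n by simp
  then have 3: "(1 + a) * (1 + a + d) \<le> (2 * a) * (2 * (a * (n + d)))"
    by (rule mult_mono'[rotated]) (use a n d in auto)
  have "n\<^sup>2 * ((1 + a) * (1 + a + d)) \<le> a\<^sup>2 * ((2 * a) * (2 * (a * (n + d))))"
    by (rule mult_mono'[OF 2 3]) (use a d n in auto)
  also have "\<dots> = 4 * (a\<^sup>2 * a\<^sup>2 * (n + d))"
    by (simp add: power2_eq_square)
  also have "\<dots> \<le> 4 * ((4 * (n - a)\<^sup>2) * a\<^sup>2 * (n + d)\<^sup>2)"
    using 1 n d by (intro mult_left_mono mult_mono') (auto simp: power2_eq_square)
  finally have "n\<^sup>2 * ((1 + a) * (1 + a + d)) \<le> 16 * ((n - a)\<^sup>2 * (n + d)\<^sup>2 * a\<^sup>2)"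
    by (simp add: ac_simps)
  moreover have "0 \<le> (n - a)\<^sup>2 * (n + d)\<^sup>2 * a\<^sup>2"
    by simp
  ultimately show ?thesis
    by linarith
qed

lemma resonance_pos_neg_near_zero:
  fixes n a d :: int
  assumes n: "n > 0" and a: "a > 0" "2 * a \<le> n" and d: "d \<ge> 1"
  shows "n\<^sup>2 * ((1 + a) * (1 + a + d)) \<le> 64 * ((n - a)\<^sup>2 * (n + d)\<^sup>2 * a\<^sup>2)"
proof -
  have "n \<le> 2 * \<bar>n - a\<bar>"
    using a by arith
  then have "n\<^sup>2 \<le> (2 * \<bar>n - a\<bar>)\<^sup>2"
    using n by (intro power_mono) auto
  then have 1: "n\<^sup>2 \<le> 4 * (n - a)\<^sup>2"
    by (simp add: power_mult_distrib)
  have "1 + a \<le> 2 * a\<^sup>2"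
    using a by (simp add: power2_eq_square) (smt (verit) mult_le_cancel_left1)
  moreover have "n + d \<le> (n + d)\<^sup>2"
    using n d by (simp add: power2_eq_square)
  then have "1 + a + d \<le> (n + d)\<^sup>2"
    using a by arith
  ultimately have 3: "(1 + a) * (1 + a + d) \<le> (2 * a\<^sup>2) * (n + d)\<^sup>2"
    using a d by (intro mult_mono') auto
  have "n\<^sup>2 * ((1 + a) * (1 + a + d)) \<le> (4 * (n - a)\<^sup>2) * ((2 * a\<^sup>2) * (n + d)\<^sup>2)"
    by (rule mult_mono'[OF 1 3]) (use a d n in auto)
  then have "n\<^sup>2 * ((1 + a) * (1 + a + d)) \<le> 8 * ((n - a)\<^sup>2 * (n + d)\<^sup>2 * a\<^sup>2)"
    by (simp add: ac_simps)
  moreover have "0 \<le> (n - a)\<^sup>2 * (n + d)\<^sup>2 * a\<^sup>2"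
    by simp
  ultimately show ?thesis
    by linarith
qed

lemma resonance_pos_neg_comparable:
  fixes n a d :: int
  assumes n: "n > 0" and a: "a < 2 * n" "n < 2 * a" and na: "n \<noteq> a" and d: "d \<ge> 1"
  shows "n\<^sup>2 * ((1 + a) * (1 + a + d)) \<le> 64 * ((n - a)\<^sup>2 * (n + d)\<^sup>2 * a\<^sup>2)"
proof -
  have 1: "n\<^sup>2 \<le> (2 * a)\<^sup>2"
    using a n by (intro power_mono) auto
  have 3: "(1 + a) * (1 + a + d) \<le> (4 * (n + d)) * (2 * (n + d))"
    using a d n by (intro mult_mono') auto
  have 4: "(n - a)\<^sup>2 \<ge> 1"
    using na power2_ge_1_iff by fastforce
  have "n\<^sup>2 * ((1 + a) * (1 + a + d)) \<le> (2 * a)\<^sup>2 * ((4 * (n + d)) * (2 * (n + d)))"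
    by (rule mult_mono'[OF 1 3]) (use a d n in auto)
  also have "\<dots> = 32 * (1 * (n + d)\<^sup>2 * a\<^sup>2)"
    by (simp add: power2_eq_square algebra_simps)
  also have "\<dots> \<le> 64 * ((n - a)\<^sup>2 * (n + d)\<^sup>2 * a\<^sup>2)"
    using 4 by (intro mult_mono' mult_right_mono) auto
  finally show ?thesis .
qed

lemma resonance_bounds_pos_neg:
  fixes n a b :: int
  assumes n: "n > 0" and a: "a > 0" and ab: "a + b < 0" and na: "n \<noteq> a"
  defines "P \<equiv> \<bar>Phi n (n - a - b) a b\<bar>" and "Q \<equiv> n * \<bar>a + b\<bar>"
  shows "P > 0" "Q \<le> P * max 1 \<bar>a\<bar>"
    "4 * Q\<^sup>2 * ((1 + \<bar>a\<bar>) * (1 + \<bar>b\<bar>)) \<le> 64 * (P\<^sup>2 * (n - a - b)\<^sup>2 * (max 1 \<bar>a\<bar>)\<^sup>2)"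
proof -
  define d where "d = - (a + b)"
  have d: "d \<ge> 1" "b = - a - d"
    unfolding d_def using ab by simp_all
  have "Phi n (n - a - b) a b = - 2 * d * (n - a)"
    unfolding Phi_def d(2) using a d(1) n
    by (simp add: abs_of_pos abs_of_neg power2_eq_square algebra_simps)
  then have P: "P = 2 * d * \<bar>n - a\<bar>"
    unfolding P_def using d by (simp add: abs_mult)
  have Q: "Q = n * d"
    unfolding Q_def d_def using ab by simp
  have h: "max 1 \<bar>a\<bar> = a"
    using a by simp
  show "P > 0"
    using P d na by simp
  have "n * d \<le> (2 * a * \<bar>n - a\<bar>) * d"
    using le_two_mult_abs_diff[OF n a na] d by (intro mult_right_mono) auto
  then show "Q \<le> P * max 1 \<bar>a\<bar>"
    unfolding P Q h by (simp add: ac_simps)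
  have aux: "n\<^sup>2 * ((1 + a) * (1 + a + d)) \<le> 64 * ((n - a)\<^sup>2 * (n + d)\<^sup>2 * a\<^sup>2)"
  proof (cases "2 * n \<le> a")
    case True
    then show ?thesis
      by (rule resonance_pos_neg_far[OF n _ d(1)])
  next
    case False
    then show ?thesis
      using resonance_pos_neg_near_zero[OF n a _ d(1)] resonance_pos_neg_comparable[OF n _ _ na d(1)]
      by fastforce
  qed
  have "4 * Q\<^sup>2 * ((1 + \<bar>a\<bar>) * (1 + \<bar>b\<bar>)) = (4 * d\<^sup>2) * (n\<^sup>2 * ((1 + a) * (1 + a + d)))"
    unfolding Q d(2) using a d(1) by (simp add: power2_eq_square algebra_simps)
  also have "\<dots> \<le> (4 * d\<^sup>2) * (64 * ((n - a)\<^sup>2 * (n + d)\<^sup>2 * a\<^sup>2))"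
    using aux by (intro mult_left_mono) auto
  also have "\<dots> = 64 * (P\<^sup>2 * (n - a - b)\<^sup>2 * (max 1 \<bar>a\<bar>)\<^sup>2)"
    unfolding P h d(2) by (simp add: power2_eq_square algebra_simps)
  finally show "4 * Q\<^sup>2 * ((1 + \<bar>a\<bar>) * (1 + \<bar>b\<bar>)) \<le> 64 * (P\<^sup>2 * (n - a - b)\<^sup>2 * (max 1 \<bar>a\<bar>)\<^sup>2)" .
qed

lemma resonance_neg_pos_weight:
  fixes n a b :: int
  assumes n: "n > 0" and b: "b > 0" and ab: "a + b < 0" and nb: "n \<noteq> b"
  shows "n\<^sup>2 * ((1 + \<bar>a\<bar>) * (1 + b)) \<le> 64 * ((n - b)\<^sup>2 * (n - a - b)\<^sup>2 * a\<^sup>2)"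
proof -
  have 1: "n\<^sup>2 \<le> (n - a - b)\<^sup>2"
    using n ab by (intro power_mono) auto
  have 2: "(1 + \<bar>a\<bar>) * (1 + b) \<le> (2 * \<bar>a\<bar>) * (2 * \<bar>a\<bar>)"
    using ab b by (intro mult_mono') auto
  have "n\<^sup>2 * ((1 + \<bar>a\<bar>) * (1 + b)) \<le> (n - a - b)\<^sup>2 * ((2 * \<bar>a\<bar>) * (2 * \<bar>a\<bar>))"
    by (rule mult_mono'[OF 1 2]) (use b in auto)
  also have "\<dots> = 4 * (1 * (n - a - b)\<^sup>2 * a\<^sup>2)"
    by (simp add: power2_eq_square)
  also have "\<dots> \<le> 64 * ((n - b)\<^sup>2 * (n - a - b)\<^sup>2 * a\<^sup>2)"
    using nb power2_ge_1_iff[of "n - b"] by (intro mult_mono' mult_right_mono) auto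
  finally show ?thesis .
qed

lemma resonance_bounds_neg_pos:
  fixes n a b :: int
  assumes n: "n > 0" and b: "b > 0" and ab: "a + b < 0" and nb: "n \<noteq> b"
  defines "P \<equiv> \<bar>Phi n (n - a - b) a b\<bar>" and "Q \<equiv> n * \<bar>a + b\<bar>"
  shows "P > 0" "Q \<le> P * max 1 \<bar>a\<bar>"
    "4 * Q\<^sup>2 * ((1 + \<bar>a\<bar>) * (1 + \<bar>b\<bar>)) \<le> 64 * (P\<^sup>2 * (n - a - b)\<^sup>2 * (max 1 \<bar>a\<bar>)\<^sup>2)"
proof -
  define d where "d = - (a + b)"
  have d: "d \<ge> 1" "a = - b - d"
    unfolding d_def using ab by simp_all
  have "Phi n (n - a - b) a b = - 2 * d * (n - b)"
    unfolding Phi_def d(2) using b d(1) n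
    by (simp add: abs_of_pos abs_of_neg power2_eq_square algebra_simps)
  then have P: "P = 2 * d * \<bar>n - b\<bar>"
    unfolding P_def using d by (simp add: abs_mult)
  have Q: "Q = n * d"
    unfolding Q_def d_def using ab by simp
  have h: "max 1 \<bar>a\<bar> = \<bar>a\<bar>" "b < \<bar>a\<bar>"
    using ab b by auto
  show "P > 0"
    using P d nb by simp
  have "n \<le> 2 * \<bar>a\<bar> * \<bar>n - b\<bar>"
    using le_two_mult_abs_diff[OF n b nb] h(2) mult_right_mono[of "2 * b" "2 * \<bar>a\<bar>" "\<bar>n - b\<bar>"]
    by linarith
  then have "n * d \<le> (2 * \<bar>a\<bar> * \<bar>n - b\<bar>) * d"
    using d by (intro mult_right_mono) auto
  then show "Q \<le> P * max 1 \<bar>a\<bar>"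
    unfolding P Q h by (simp add: ac_simps)
  have "4 * Q\<^sup>2 * ((1 + \<bar>a\<bar>) * (1 + \<bar>b\<bar>)) = (4 * d\<^sup>2) * (n\<^sup>2 * ((1 + \<bar>a\<bar>) * (1 + b)))"
    unfolding Q using b by (simp add: power2_eq_square algebra_simps)
  also have "\<dots> \<le> (4 * d\<^sup>2) * (64 * ((n - b)\<^sup>2 * (n - a - b)\<^sup>2 * a\<^sup>2))"
    using resonance_neg_pos_weight[OF n b ab nb] by (intro mult_left_mono) auto
  also have "\<dots> = 64 * (P\<^sup>2 * (n - a - b)\<^sup>2 * (max 1 \<bar>a\<bar>)\<^sup>2)"
    unfolding P h by (simp add: power2_eq_square algebra_simps)
  finally show "4 * Q\<^sup>2 * ((1 + \<bar>a\<bar>) * (1 + \<bar>b\<bar>)) \<le> 64 * (P\<^sup>2 * (n - a - b)\<^sup>2 * (max 1 \<bar>a\<bar>)\<^sup>2)" .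
qed

section \<open>The symbol of N0\<close>

lemma m1t_support:
  assumes "m1t n (n - a - b) a b \<noteq> 0"
  shows "n > 0" "a + b < 0" "b \<noteq> 0" "n \<noteq> a" "n \<noteq> b"
  using assms unfolding m1t_def m1_def by (auto split: if_splits)

lemma cmod_hatn: "cmod (hatn a) = real_of_int (max 1 \<bar>a\<bar>)"
  unfolding hatn_def by auto

lemma cmod_m1t:
  assumes "m1t n (n - a - b) a b \<noteq> 0"
  shows "cmod (m1t n (n - a - b) a b)
           = 2 * real_of_int (n * \<bar>a + b\<bar>) / (real_of_int (n - a - b) * real_of_int (max 1 \<bar>a\<bar>))"
proof -
  note S = m1t_support[OF assms]
  have "m1t n (n - a - b) a b = 2 * \<i> * of_int (n * (a + b)) / (hatn (n - a - b) * hatn a)"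
    using assms unfolding m1t_def m1_def by (auto split: if_splits)
  moreover have "cmod (hatn (n - a - b)) = real_of_int (n - a - b)"
    using S(1,2) by (simp add: cmod_hatn)
  moreover have "\<bar>real_of_int (n * (a + b))\<bar> = real_of_int (n * \<bar>a + b\<bar>)"
    using S(1) by (simp add: abs_mult)
  ultimately show ?thesis
    by (simp add: norm_mult norm_divide cmod_hatn del: of_int_mult)
qed

lemma m1t_resonance_bounds:
  assumes "m1t n (n - a - b) a b \<noteq> 0"
  defines "P \<equiv> \<bar>Phi n (n - a - b) a b\<bar>" and "Q \<equiv> n * \<bar>a + b\<bar>"
  shows "P > 0" "Q \<le> P * max 1 \<bar>a\<bar>"
    "4 * Q\<^sup>2 * ((1 + \<bar>a\<bar>) * (1 + \<bar>b\<bar>)) \<le> 64 * (P\<^sup>2 * (n - a - b)\<^sup>2 * (max 1 \<bar>a\<bar>)\<^sup>2)"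
proof -
  note S = m1t_support[OF assms(1)]
  consider "a \<le> 0" "b < 0" | "a > 0" "b < 0" | "a < 0" "b > 0"
    using S(2,3) by linarith
  then have "P > 0 \<and> Q \<le> P * max 1 \<bar>a\<bar> \<and>
    4 * Q\<^sup>2 * ((1 + \<bar>a\<bar>) * (1 + \<bar>b\<bar>)) \<le> 64 * (P\<^sup>2 * (n - a - b)\<^sup>2 * (max 1 \<bar>a\<bar>)\<^sup>2)"
  proof cases
    case 1
    then show ?thesis
      using resonance_bounds_nonpos_neg[OF S(1) 1] unfolding P_def Q_def by blast
  next
    case 2
    then show ?thesis
      using resonance_bounds_pos_neg[OF S(1) 2(1) S(2) S(4)] unfolding P_def Q_def by blast
  next
    case 3
    then show ?thesis
      using resonance_bounds_neg_pos[OF S(1) 3(2) S(2) S(5)] unfolding P_def Q_def by blast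
  qed
  then show "P > 0" "Q \<le> P * max 1 \<bar>a\<bar>"
    "4 * Q\<^sup>2 * ((1 + \<bar>a\<bar>) * (1 + \<bar>b\<bar>)) \<le> 64 * (P\<^sup>2 * (n - a - b)\<^sup>2 * (max 1 \<bar>a\<bar>)\<^sup>2)"
    by auto
qed

text \<open>
  The identity behind the proof is \<open>x = (x n1)^(2g) (x\<^sup>2 J)^(1/2 - g) n1^(-2g) J^(g - 1/2)\<close>.
\<close>

lemma powr_interpolation:
  fixes x n1 J P g :: real
  assumes x: "x > 0" and n1: "n1 > 0" and J: "J > 0" and g: "0 \<le> g" "g \<le> 1/2"
    and bound1: "x * n1 \<le> 2" and bound2: "x\<^sup>2 * J \<le> 64"
    and P: "0 \<le> P" "P \<le> 4 * (n1\<^sup>2 * J\<^sup>2)"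
  shows "x * P powr g \<le> 4 powr g * (2 powr (2 * g) * 64 powr (1/2 - g)) * J powr (3 * g - 1/2)"
proof -
  have "x * P powr g \<le> x * (4 * (n1\<^sup>2 * J\<^sup>2)) powr g"
    using x P g by (intro mult_left_mono powr_mono2) auto
  also have "\<dots> = 4 powr g * ((x * n1) powr (2 * g) * (x\<^sup>2 * J) powr (1/2 - g)) * J powr (3 * g - 1/2)"
    using x n1 J by (simp add: powr_def ln_mult mult_exp_exp ln_realpow algebra_simps) (simp add: exp_add)
  also have "\<dots> \<le> 4 powr g * (2 powr (2 * g) * 64 powr (1/2 - g)) * J powr (3 * g - 1/2)"
    using x n1 J g bound1 bound2 by (intro mult_right_mono mult_left_mono mult_mono powr_mono2) auto
  finally show ?thesis .
qed

lemma m1t_div_Phi_bounds: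
  assumes m: "m1t n (n - a - b) a b \<noteq> 0"
  defines "x \<equiv> cmod (m1t n (n - a - b) a b) / real_of_int \<bar>Phi n (n - a - b) a b\<bar>"
    and "J \<equiv> jbr a * jbr b"
  shows "x > 0" "x * real_of_int (n - a - b) \<le> 2" "x\<^sup>2 * J \<le> 64"
    and "real_of_int \<bar>Phi n (n - a - b) a b\<bar> \<le> 4 * ((real_of_int (n - a - b))\<^sup>2 * J\<^sup>2)"
proof -
  define P where "P = real_of_int \<bar>Phi n (n - a - b) a b\<bar>"
  define Q where "Q = real_of_int (n * \<bar>a + b\<bar>)"
  define n1 where "n1 = real_of_int (n - a - b)"
  define h where "h = real_of_int (max 1 \<bar>a\<bar>)"
  note S = m1t_support[OF m]
  note B = m1t_resonance_bounds[OF m]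
  have x: "x = 2 * Q / (n1 * h * P)"
    unfolding x_def cmod_m1t[OF m] P_def Q_def n1_def h_def by simp
  have pos: "P > 0" "Q > 0" "n1 \<ge> 1" "h \<ge> 1"
    using B(1) S(1,2) unfolding P_def Q_def n1_def h_def by (auto simp: zero_less_mult_iff)
  show "x > 0"
    unfolding x using pos by simp
  have "Q \<le> P * h"
    using B(2) unfolding P_def Q_def h_def by (metis of_int_le_iff of_int_mult)
  then show "x * real_of_int (n - a - b) \<le> 2"
    unfolding x n1_def[symmetric] using pos by (simp add: field_simps)
  have "real_of_int (4 * (n * \<bar>a + b\<bar>)\<^sup>2 * ((1 + \<bar>a\<bar>) * (1 + \<bar>b\<bar>)))
      \<le> real_of_int (64 * (\<bar>Phi n (n - a - b) a b\<bar>\<^sup>2 * (n - a - b)\<^sup>2 * (max 1 \<bar>a\<bar>)\<^sup>2))"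
    using B(3) by (simp only: of_int_le_iff)
  then have B3: "4 * Q\<^sup>2 * ((1 + \<bar>real_of_int a\<bar>) * (1 + \<bar>real_of_int b\<bar>)) \<le> 64 * (P\<^sup>2 * n1\<^sup>2 * h\<^sup>2)"
    unfolding P_def Q_def n1_def h_def by simp
  have "J \<le> (1 + \<bar>real_of_int a\<bar>) * (1 + \<bar>real_of_int b\<bar>)"
    unfolding J_def by (intro mult_mono jbr_le_1_plus_abs) (auto simp: less_imp_le[OF jbr_pos])
  then have "x\<^sup>2 * J \<le> x\<^sup>2 * ((1 + \<bar>real_of_int a\<bar>) * (1 + \<bar>real_of_int b\<bar>))"
    by (intro mult_left_mono) auto
  also have "\<dots> = 4 * Q\<^sup>2 * ((1 + \<bar>real_of_int a\<bar>) * (1 + \<bar>real_of_int b\<bar>)) / (P\<^sup>2 * n1\<^sup>2 * h\<^sup>2)"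
    unfolding x by (simp add: power2_eq_square field_simps)
  also have "\<dots> \<le> 64"
    using B3 pos by (simp add: divide_le_eq)
  finally show "x\<^sup>2 * J \<le> 64" .
  have "J\<^sup>2 = (1 + (real_of_int a)\<^sup>2) * (1 + (real_of_int b)\<^sup>2)"
    unfolding J_def by (simp add: power_mult_distrib power2_jbr)
  moreover have "real_of_int \<bar>Phi n (n - a - b) a b\<bar>
      \<le> real_of_int (4 * ((n - a - b)\<^sup>2 * ((1 + a\<^sup>2) * (1 + b\<^sup>2))))"
    using resonance_size_bound[OF S(1,2)] by (simp only: of_int_le_iff)
  ultimately show "real_of_int \<bar>Phi n (n - a - b) a b\<bar> \<le> 4 * ((real_of_int (n - a - b))\<^sup>2 * J\<^sup>2)"
    by simp
qed

text \<open>
  \<open>gain_exp s\<close> is the \<open>\<delta>\<close> of the theorem; \<open>4 \<delta> \<le> s\<close> lets the weights \<open>\<langle>a\<rangle>^s \<langle>b\<rangle>^s\<close>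
  absorb the loss \<open>(\<langle>a\<rangle>\<langle>b\<rangle>)^(4\<delta>)\<close> of the interpolation.
\<close>

definition gain_exp :: "real \<Rightarrow> real" where
  "gain_exp s = min s 1 / 4"

definition mult_const :: "real \<Rightarrow> real" where
  "mult_const s = 4 powr gain_exp s * (2 powr (2 * gain_exp s) * 64 powr (1/2 - gain_exp s))"

definition kernel_weight :: "real \<Rightarrow> int \<Rightarrow> int \<Rightarrow> real" where
  "kernel_weight s a b = (jbr a * jbr b) powr (- (1/2 + gain_exp s))"

definition trilin_const :: "real \<Rightarrow> real" where
  "trilin_const s = mult_const s * (\<Sum>\<^sub>\<infinity>k. jbr k powr (- (1 + 2 * gain_exp s)))"

lemma gain_exp_pos: "s > 0 \<Longrightarrow> gain_exp s > 0"
  and gain_exp_le: "gain_exp s \<le> 1/4"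
  unfolding gain_exp_def by auto

lemma mult_const_nonneg: "mult_const s \<ge> 0"
  unfolding mult_const_def by simp

lemma trilin_const_nonneg: "trilin_const s \<ge> 0"
  unfolding trilin_const_def by (simp add: mult_const_nonneg infsum_nonneg)

lemma kernel_weight_nonneg: "kernel_weight s a b \<ge> 0"
  unfolding kernel_weight_def by simp

lemma has_sum_kernel_weight:
  assumes s: "s > 0"
  shows "((\<lambda>(a, b). (kernel_weight s a b)\<^sup>2)
           has_sum (\<Sum>\<^sub>\<infinity>k. jbr k powr (- (1 + 2 * gain_exp s)))\<^sup>2) UNIV"
proof -
  let ?p = "1 + 2 * gain_exp s"
  have sq: "(kernel_weight s a b)\<^sup>2 = jbr a powr (- ?p) * jbr b powr (- ?p)" for a b
    unfolding kernel_weight_def power2_eq_square powr_add[symmetric]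
    by (simp add: powr_mult less_imp_le[OF jbr_pos])
  have "((\<lambda>(a, b). jbr a powr (- ?p) * jbr b powr (- ?p))
      has_sum (\<Sum>\<^sub>\<infinity>k. jbr k powr (- ?p)) * (\<Sum>\<^sub>\<infinity>k. jbr k powr (- ?p))) UNIV"
    by (rule has_sum_product_nonneg)
       (use summable_on_jbr_powr[of ?p] gain_exp_pos[OF s] in simp_all)
  then show ?thesis
    unfolding sq by (simp add: power2_eq_square)
qed

lemma multiplier_bound:
  assumes s: "s > 0"
  shows "cmod (m1t n (n - a - b) a b) / real_of_int \<bar>Phi n (n - a - b) a b\<bar>
           * real_of_int \<bar>Phi n (n - a - b) a b\<bar> powr gain_exp s * jbr n powr s
         \<le> mult_const s * (jbr (n - a - b) powr s * (jbr a powr s * jbr b powr s)) * kernel_weight s a b"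
proof (cases "m1t n (n - a - b) a b = 0")
  case True
  then show ?thesis
    by (simp add: mult_const_nonneg kernel_weight_nonneg)
next
  case False
  let ?\<gamma> = "gain_exp s" and ?P = "real_of_int \<bar>Phi n (n - a - b) a b\<bar>"
  define x where "x = cmod (m1t n (n - a - b) a b) / ?P"
  define J where "J = jbr a * jbr b"
  note B = m1t_div_Phi_bounds[OF False, folded x_def J_def]
  note S = m1t_support[OF False]
  have J: "J \<ge> 1"
    unfolding J_def using mult_mono[OF jbr_ge_1[of a] jbr_ge_1[of b]] jbr_pos[of a] by simp
  have \<gamma>: "0 < ?\<gamma>" "?\<gamma> \<le> 1/4" "4 * ?\<gamma> \<le> s"
    using gain_exp_pos[OF s] gain_exp_le[of s] unfolding gain_exp_def by auto
  have "x * ?P powr ?\<gamma> \<le> mult_const s * J powr (3 * ?\<gamma> - 1/2)"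
    unfolding mult_const_def
    by (rule powr_interpolation[OF B(1) _ _ _ _ B(2,3) _ B(4)]) (use S J \<gamma> in auto)
  also have "J powr (3 * ?\<gamma> - 1/2) = J powr (4 * ?\<gamma>) * J powr (- (1/2 + ?\<gamma>))"
    by (simp add: powr_add[symmetric] algebra_simps)
  also have "\<dots> \<le> (jbr a powr s * jbr b powr s) * kernel_weight s a b"
  proof -
    have "J powr (4 * ?\<gamma>) \<le> J powr s"
      using J \<gamma> by (intro powr_mono) auto
    also have "\<dots> = jbr a powr s * jbr b powr s"
      unfolding J_def by (simp add: powr_mult less_imp_le[OF jbr_pos])
    finally show ?thesis
      unfolding kernel_weight_def J_def[symmetric] by (rule mult_right_mono) simp
  qed
  finally have "x * ?P powr ?\<gamma> \<le> mult_const s * ((jbr a powr s * jbr b powr s) * kernel_weight s a b)"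
    using mult_const_nonneg by (simp add: mult_left_mono)
  moreover have "jbr n powr s \<le> jbr (n - a - b) powr s"
    using S(1,2) s by (intro jbr_powr_mono) auto
  ultimately have "x * ?P powr ?\<gamma> * jbr n powr s
      \<le> mult_const s * ((jbr a powr s * jbr b powr s) * kernel_weight s a b) * jbr (n - a - b) powr s"
    by (rule mult_mono) (simp_all add: mult_const_nonneg kernel_weight_nonneg)
  then show ?thesis
    unfolding x_def by (simp add: ac_simps)
qed

definition N0_kernel :: "real \<Rightarrow> real \<Rightarrow> int \<Rightarrow> int \<Rightarrow> int \<Rightarrow> complex" where
  "N0_kernel M t n a b =
     (if n > 0 \<and> real_of_int \<bar>Phi n (n - a - b) a b\<bar> > M then
        - \<i> * (exp (\<i> * of_real t * of_int (Phi n (n - a - b) a b)) * m1t n (n - a - b) a b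
                / of_int (Phi n (n - a - b) a b))
      else 0)"

lemma N0_eq_trilin: "N0 M w t = trilin (N0_kernel M t) (w t) (w t) (star (w t))"
proof
  fix n
  show "N0 M w t n = trilin (N0_kernel M t) (w t) (w t) (star (w t)) n"
  proof (cases "n > 0")
    case False
    then show ?thesis
      unfolding N0_def trilin_def N0_kernel_def by (simp add: case_prod_unfold)
  next
    case True
    define F where "F = (\<lambda>(n1, n2, n3). exp (\<i> * of_real t * of_int (Phi n n1 n2 n3)) * m1t n n1 n2 n3
      / of_int (Phi n n1 n2 n3) * w t n1 * w t n2 * star (w t) n3)"
    define S where "S = {(a, b). real_of_int \<bar>Phi n (n - a - b) a b\<bar> > M}"
    have "N0 M w t n = - \<i> * infsum F {(n1, n2, n3). n1 + n2 + n3 = n \<and> real_of_int \<bar>Phi n n1 n2 n3\<bar> > M}"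
      using True unfolding N0_def F_def by simp
    also have "\<dots> = - \<i> * infsum (\<lambda>(a, b). F (n - a - b, a, b)) S"
      by (subst infsum_reindex_bij_witness[where i="\<lambda>(a, b). (n - a - b, a, b)"
            and j="\<lambda>(n1, n2, n3). (n2, n3)"]) (auto simp: S_def)
    also have "\<dots> = - \<i> * infsum (\<lambda>(a, b). if (a, b) \<in> S then F (n - a - b, a, b) else 0) UNIV"
      by (subst infsum_cong_neutral[where T=UNIV]) auto
    also have "\<dots> = infsum (\<lambda>(a, b). - \<i> * (if (a, b) \<in> S then F (n - a - b, a, b) else 0)) UNIV"
      by (subst infsum_cmult_right'[symmetric]) (simp add: case_prod_unfold)
    also have "\<dots> = trilin (N0_kernel M t) (w t) (w t) (star (w t)) n"
      unfolding trilin_def by (rule infsum_cong) (auto simp: N0_kernel_def S_def F_def True)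
    finally show ?thesis .
  qed
qed

lemma norm_cis_minus_1_le: "cmod (cis x - 1) \<le> \<bar>x\<bar>"
proof -
  have "(cmod (cis x - 1))\<^sup>2 = (cos x - 1)\<^sup>2 + (sin x)\<^sup>2"
    by (simp add: cmod_power2)
  also have "\<dots> = 2 - 2 * cos x"
    using sin_cos_squared_add[of x] by (simp add: power2_eq_square algebra_simps)
  also have "\<dots> = 4 * (sin (x / 2))\<^sup>2"
    using cos_double_sin[of "x / 2"] by simp
  also have "\<dots> \<le> 4 * (x / 2)\<^sup>2"
    using abs_sin_x_le_abs_x[of "x / 2"] abs_le_square_iff[of "sin (x / 2)" "x / 2"] by simp
  also have "\<dots> = \<bar>x\<bar>\<^sup>2"
    by (simp add: power2_eq_square)
  finally show ?thesis
    by (rule power2_le_imp_le) simp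
qed

lemma norm_exp_ii_diff_le:
  fixes x y g :: real
  assumes "0 < g" "g \<le> 1"
  shows "cmod (exp (\<i> * of_real x) - exp (\<i> * of_real y)) \<le> 2 * \<bar>x - y\<bar> powr g"
proof -
  have "exp (\<i> * of_real x) - exp (\<i> * of_real y) = exp (\<i> * of_real y) * (cis (x - y) - 1)"
    by (simp add: cis_conv_exp algebra_simps flip: exp_add)
  then have lipschitz: "cmod (exp (\<i> * of_real x) - exp (\<i> * of_real y)) \<le> \<bar>x - y\<bar>"
    using norm_cis_minus_1_le[of "x - y"] by (simp add: norm_mult)
  have bounded: "cmod (exp (\<i> * of_real x) - exp (\<i> * of_real y)) \<le> 2"
    using norm_triangle_ineq4[of "exp (\<i> * of_real x)" "exp (\<i> * of_real y)"] by simp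
  show ?thesis
  proof (cases "\<bar>x - y\<bar> \<le> 1")
    case True
    have "\<bar>x - y\<bar> \<le> \<bar>x - y\<bar> powr g"
    proof (cases "x = y")
      case False
      then show ?thesis
        using powr_mono'[of g 1 "\<bar>x - y\<bar>"] True assms by simp
    qed simp
    then show ?thesis
      using lipschitz powr_ge_zero[of "\<bar>x - y\<bar>" g] by linarith
  next
    case False
    then have "1 \<le> \<bar>x - y\<bar> powr g"
      using assms by (intro ge_one_powr_ge_zero) auto
    then show ?thesis
      using bounded by linarith
  qed
qed

lemma N0_kernel_bound:
  assumes s: "s > 0" and M: "M \<ge> 1"
  shows "cmod (N0_kernel M t n a b) * jbr n powr s
    \<le> (M powr (- gain_exp s) * mult_const s * kernel_weight s a b)
        * (jbr (n - a - b) powr s * (jbr a powr s * jbr b powr s))"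
proof (cases "n > 0 \<and> real_of_int \<bar>Phi n (n - a - b) a b\<bar> > M")
  case False
  then have "N0_kernel M t n a b = 0"
    unfolding N0_kernel_def by auto
  then show ?thesis
    by (simp add: mult_const_nonneg kernel_weight_nonneg)
next
  case True
  let ?\<gamma> = "gain_exp s"
  define P where "P = real_of_int \<bar>Phi n (n - a - b) a b\<bar>"
  define y where "y = cmod (m1t n (n - a - b) a b) / P * jbr n powr s"
  have P: "P > M" "P > 0"
    using True M unfolding P_def by auto
  have gain: "1 \<le> P powr ?\<gamma> * M powr (- ?\<gamma>)"
  proof -
    have "M powr ?\<gamma> \<le> P powr ?\<gamma>"
      using P M gain_exp_pos[OF s] by (intro powr_mono2) auto
    then show ?thesis
      using M by (simp add: powr_minus field_simps)
  qed
  have "exp (\<i> * of_real t * of_int (Phi n (n - a - b) a b))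
      = exp (\<i> * of_real (t * of_int (Phi n (n - a - b) a b)))"
    by (simp add: mult.assoc)
  then have "cmod (N0_kernel M t n a b) * jbr n powr s = y"
    unfolding N0_kernel_def y_def P_def using True by (simp add: norm_mult norm_divide)
  also have "\<dots> \<le> y * (P powr ?\<gamma> * M powr (- ?\<gamma>))"
    using mult_left_mono[OF gain, of y] P unfolding y_def by simp
  also have "\<dots> = M powr (- ?\<gamma>) * (cmod (m1t n (n - a - b) a b) / P * P powr ?\<gamma> * jbr n powr s)"
    unfolding y_def by (simp add: ac_simps)
  also have "\<dots> \<le> M powr (- ?\<gamma>)
      * (mult_const s * (jbr (n - a - b) powr s * (jbr a powr s * jbr b powr s)) * kernel_weight s a b)"
    using multiplier_bound[OF s, of n a b] unfolding P_def by (intro mult_left_mono) auto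
  finally show ?thesis
    by (simp add: ac_simps)
qed

lemma N0_kernel_diff_bound:
  assumes s: "s > 0"
  shows "cmod (N0_kernel M t n a b - N0_kernel M t' n a b) * jbr n powr s
    \<le> (2 * \<bar>t - t'\<bar> powr gain_exp s * mult_const s * kernel_weight s a b)
        * (jbr (n - a - b) powr s * (jbr a powr s * jbr b powr s))"
proof (cases "n > 0 \<and> real_of_int \<bar>Phi n (n - a - b) a b\<bar> > M")
  case False
  then have "N0_kernel M t n a b = 0" "N0_kernel M t' n a b = 0"
    unfolding N0_kernel_def by auto
  then show ?thesis
    by (simp add: mult_const_nonneg kernel_weight_nonneg)
next
  case True
  let ?\<gamma> = "gain_exp s"
  define F where "F = real_of_int (Phi n (n - a - b) a b)"
  define y where "y = cmod (m1t n (n - a - b) a b) / \<bar>F\<bar>"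
  have \<gamma>: "0 < ?\<gamma>" "?\<gamma> \<le> 1"
    using gain_exp_pos[OF s] gain_exp_le[of s] by auto
  have "N0_kernel M t n a b - N0_kernel M t' n a b
      = - \<i> * ((exp (\<i> * of_real (t * F)) - exp (\<i> * of_real (t' * F))) * (m1t n (n - a - b) a b / of_real F))"
    unfolding N0_kernel_def F_def using True by (simp add: algebra_simps)
  then have "cmod (N0_kernel M t n a b - N0_kernel M t' n a b)
      = cmod (exp (\<i> * of_real (t * F)) - exp (\<i> * of_real (t' * F))) * y"
    unfolding y_def by (simp add: norm_mult norm_divide)
  also have "\<dots> \<le> 2 * \<bar>t * F - t' * F\<bar> powr ?\<gamma> * y"
    unfolding y_def by (intro mult_right_mono norm_exp_ii_diff_le \<gamma>) simp
  also have "\<bar>t * F - t' * F\<bar> powr ?\<gamma> = \<bar>t - t'\<bar> powr ?\<gamma> * \<bar>F\<bar> powr ?\<gamma>"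
    by (simp add: left_diff_distrib[symmetric] abs_mult powr_mult)
  finally have "cmod (N0_kernel M t n a b - N0_kernel M t' n a b) * jbr n powr s
      \<le> (2 * (\<bar>t - t'\<bar> powr ?\<gamma> * \<bar>F\<bar> powr ?\<gamma>) * y) * jbr n powr s"
    by (rule mult_right_mono) simp
  also have "\<dots> = 2 * \<bar>t - t'\<bar> powr ?\<gamma> * (y * \<bar>F\<bar> powr ?\<gamma> * jbr n powr s)"
    by (simp add: ac_simps)
  also have "\<dots> \<le> 2 * \<bar>t - t'\<bar> powr ?\<gamma>
      * (mult_const s * (jbr (n - a - b) powr s * (jbr a powr s * jbr b powr s)) * kernel_weight s a b)"
    using multiplier_bound[OF s, of n a b] unfolding y_def F_def by (intro mult_left_mono) auto
  finally show ?thesis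
    by (simp add: ac_simps)
qed

section \<open>Estimates in \<open>\<ell>\<^sup>2_s\<close> at a fixed time\<close>

lemma trilin_bound_kernel_weight:
  fixes c :: "int \<Rightarrow> int \<Rightarrow> int \<Rightarrow> complex"
  assumes s: "s > 0" and A: "A \<ge> 0"
    and c: "\<And>n a b. cmod (c n a b) * jbr n powr s
             \<le> (A * mult_const s * kernel_weight s a b)
                 * (jbr (n - a - b) powr s * (jbr a powr s * jbr b powr s))"
    and f: "in_l2s s f1" "in_l2s s f2" "in_l2s s f3"
  shows "(\<lambda>(a, b). c n a b * f1 (n - a - b) * f2 a * f3 b) summable_on UNIV"
    and "in_l2s s (trilin c f1 f2 f3)"
    and "l2s_norm s (trilin c f1 f2 f3)
           \<le> A * trilin_const s * (l2s_norm s f1 * (l2s_norm s f2 * l2s_norm s f3))"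
proof -
  define S where "S = (\<Sum>\<^sub>\<infinity>k. jbr k powr (- (1 + 2 * gain_exp s)))"
  have "((\<lambda>(a, b). (A * mult_const s * kernel_weight s a b)\<^sup>2) has_sum (A * mult_const s * S)\<^sup>2) UNIV"
    using has_sum_cmult_right[OF has_sum_kernel_weight[OF s], of "(A * mult_const s)\<^sup>2"]
    by (simp add: S_def power_mult_distrib case_prod_unfold)
  note T = trilin_bound[OF this c f]
  have "sqrt ((A * mult_const s * S)\<^sup>2) = A * trilin_const s"
    using A by (simp add: S_def trilin_const_def mult_const_nonneg infsum_nonneg ac_simps)
  then show "(\<lambda>(a, b). c n a b * f1 (n - a - b) * f2 a * f3 b) summable_on UNIV"
    and "in_l2s s (trilin c f1 f2 f3)"
    and "l2s_norm s (trilin c f1 f2 f3)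
           \<le> A * trilin_const s * (l2s_norm s f1 * (l2s_norm s f2 * l2s_norm s f3))"
    using T by simp_all
qed

lemma N0_kernel_trilin:
  assumes s: "s > 0" and M: "M \<ge> 1" and f: "in_l2s s f1" "in_l2s s f2" "in_l2s s f3"
  shows "(\<lambda>(a, b). N0_kernel M t n a b * f1 (n - a - b) * f2 a * f3 b) summable_on UNIV"
    and "in_l2s s (trilin (N0_kernel M t) f1 f2 f3)"
    and "l2s_norm s (trilin (N0_kernel M t) f1 f2 f3)
           \<le> M powr (- gain_exp s) * trilin_const s * (l2s_norm s f1 * (l2s_norm s f2 * l2s_norm s f3))"
  using trilin_bound_kernel_weight[OF s _ N0_kernel_bound[OF s M] f] by simp_all

lemma N0_l2s_bound:
  assumes s: "s > 0" and M: "M \<ge> 1" and w: "in_l2s s (w t)"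
  shows "in_l2s s (N0 M w t)"
    and "l2s_norm s (N0 M w t) \<le> M powr (- gain_exp s) * trilin_const s * (l2s_norm s (w t))^3"
  using N0_kernel_trilin(2,3)[OF s M w w, of "star (w t)" t] w unfolding N0_eq_trilin
  by (simp_all add: power3_eq_cube ac_simps)

lemma N0_kernel_trilin_diff_expand:
  fixes t :: real
  assumes s: "s > 0" and M: "M \<ge> 1" and u: "in_l2s s u" and v: "in_l2s s v"
  defines "K \<equiv> N0_kernel M t" and "d \<equiv> (\<lambda>k. u k - v k)"
  shows "trilin K u u (star u) n - trilin K v v (star v) n
           = trilin K d u (star u) n + trilin K v d (star u) n + trilin K v v (star d) n"
proof -
  have d: "in_l2s s d"
    unfolding d_def using l2s_diff(1)[OF u v] .
  have star: "in_l2s s (star u)" "in_l2s s (star v)" "in_l2s s (star d)"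
    using u v d by simp_all
  note T = N0_kernel_trilin(1)[OF s M, where t=t and n=n, folded K_def]
  show ?thesis
    using trilin_diff[where c=K and n=n, OF T[OF u u star(1)] T[OF v v star(2)]
        T[OF d u star(1), unfolded d_def] T[OF v d star(1), unfolded d_def]
        T[OF v v star(3), unfolded d_def star_diff]]
    by (simp add: d_def star_diff)
qed

lemma N0_kernel_trilin_lipschitz:
  fixes t :: real
  assumes s: "s > 0" and M: "M \<ge> 1" and u: "in_l2s s u" and v: "in_l2s s v"
  defines "K \<equiv> N0_kernel M t"
  shows "in_l2s s (\<lambda>n. trilin K u u (star u) n - trilin K v v (star v) n)"
    and "l2s_norm s (\<lambda>n. trilin K u u (star u) n - trilin K v v (star v) n)
          \<le> M powr (- gain_exp s) * (2 * trilin_const s)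
              * ((l2s_norm s u)\<^sup>2 + (l2s_norm s v)\<^sup>2) * l2s_norm s (\<lambda>k. u k - v k)"
proof -
  define d where "d = (\<lambda>k. u k - v k)"
  have d: "in_l2s s d"
    unfolding d_def using l2s_diff(1)[OF u v] .
  note T = N0_kernel_trilin[OF s M, of _ _ _ t, folded K_def]
  have expand: "(\<lambda>n. trilin K u u (star u) n - trilin K v v (star v) n)
      = (\<lambda>n. trilin K d u (star u) n + trilin K v d (star u) n + trilin K v v (star d) n)"
    using N0_kernel_trilin_diff_expand[OF s M u v] unfolding K_def d_def by auto
  note A1 = T(2,3)[OF d u, of "star u"] and A2 = T(2,3)[OF v d, of "star u"]
    and A3 = T(2,3)[OF v v, of "star d"]
  note S12 = l2s_add[OF A1(1) A2(1)]
  note S = l2s_add[OF S12(1) A3(1)]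
  show "in_l2s s (\<lambda>n. trilin K u u (star u) n - trilin K v v (star v) n)"
    unfolding expand using S(1) u v d by simp
  define C where "C = M powr (- gain_exp s) * trilin_const s"
  define x y z where "x = l2s_norm s u" and "y = l2s_norm s v" and "z = l2s_norm s d"
  have "l2s_norm s (\<lambda>n. trilin K u u (star u) n - trilin K v v (star v) n)
      \<le> C * (z * (x * x)) + C * (y * (z * x)) + C * (y * (y * z))"
    unfolding expand C_def x_def y_def z_def
    using S(2) S12(2) A1(2) A2(2) A3(2) u v d by simp
  also have "\<dots> \<le> 2 * C * (x\<^sup>2 + y\<^sup>2) * z"
  proof -
    have nonneg: "C \<ge> 0" "x \<ge> 0" "y \<ge> 0" "z \<ge> 0"
      unfolding C_def x_def y_def z_def by (simp_all add: trilin_const_nonneg l2s_norm_nonneg)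
    have "2 * (y * x) \<le> x\<^sup>2 + y\<^sup>2"
      using sum_squares_ge_zero[of "x - y" 0] by (simp add: power2_eq_square algebra_simps)
    then have "y * x \<le> x\<^sup>2 + y\<^sup>2"
      using mult_nonneg_nonneg[OF nonneg(3,2)] by linarith
    then show ?thesis
      using mult_left_mono[of "y * x" "x\<^sup>2 + y\<^sup>2" "C * z"] nonneg
      by (simp add: power2_eq_square algebra_simps)
  qed
  finally show "l2s_norm s (\<lambda>n. trilin K u u (star u) n - trilin K v v (star v) n)
      \<le> M powr (- gain_exp s) * (2 * trilin_const s)
          * ((l2s_norm s u)\<^sup>2 + (l2s_norm s v)\<^sup>2) * l2s_norm s (\<lambda>k. u k - v k)"
    unfolding C_def x_def y_def z_def d_def by (simp add: ac_simps)
qed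

lemma N0_l2s_lipschitz:
  assumes s: "s > 0" and M: "M \<ge> 1" and w: "in_l2s s (w t)" and w': "in_l2s s (w' t)"
  shows "in_l2s s (\<lambda>n. N0 M w t n - N0 M w' t n)"
    and "l2s_norm s (\<lambda>n. N0 M w t n - N0 M w' t n)
          \<le> M powr (- gain_exp s) * (2 * trilin_const s)
              * ((l2s_norm s (w t))\<^sup>2 + (l2s_norm s (w' t))\<^sup>2) * l2s_norm s (\<lambda>k. w t k - w' t k)"
  using N0_kernel_trilin_lipschitz[OF s M w w', of t] unfolding N0_eq_trilin by simp_all

lemma N0_l2s_time_diff:
  assumes s: "s > 0" and M: "M \<ge> 1" and w: "in_l2s s (w t)" and w': "in_l2s s (w t')"
  shows "l2s_norm s (\<lambda>n. N0 M w t n - N0 M w t' n)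
    \<le> 2 * \<bar>t - t'\<bar> powr gain_exp s * trilin_const s * (l2s_norm s (w t))^3
      + M powr (- gain_exp s) * (2 * trilin_const s)
          * ((l2s_norm s (w t))\<^sup>2 + (l2s_norm s (w t'))\<^sup>2) * l2s_norm s (\<lambda>k. w t k - w t' k)"
proof -
  let ?u = "w t" and ?K = "\<lambda>n a b. N0_kernel M t n a b - N0_kernel M t' n a b"
  have su: "in_l2s s (star ?u)"
    using w by simp
  have A: "0 \<le> 2 * \<bar>t - t'\<bar> powr gain_exp s"
    by simp
  note D = trilin_bound_kernel_weight[OF s A N0_kernel_diff_bound[OF s, where M=M and t=t and t'=t'] w w su]
  note L = N0_kernel_trilin_lipschitz[OF s M w w', of t']
  have "(\<lambda>n. N0 M w t n - N0 M w t' n) = (\<lambda>n. trilin ?K ?u ?u (star ?u) n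
      + (trilin (N0_kernel M t') ?u ?u (star ?u) n - trilin (N0_kernel M t') (w t') (w t') (star (w t')) n))"
  proof
    fix n
    have "trilin (N0_kernel M t) ?u ?u (star ?u) n - trilin (N0_kernel M t') ?u ?u (star ?u) n
        = trilin ?K ?u ?u (star ?u) n"
      unfolding trilin_def
      using infsum_diff[OF N0_kernel_trilin(1)[OF s M w w su] N0_kernel_trilin(1)[OF s M w w su]]
      by (simp add: case_prod_unfold algebra_simps)
    then show "N0 M w t n - N0 M w t' n = trilin ?K ?u ?u (star ?u) n
        + (trilin (N0_kernel M t') ?u ?u (star ?u) n - trilin (N0_kernel M t') (w t') (w t') (star (w t')) n)"
      unfolding N0_eq_trilin by (simp add: algebra_simps)
  qed
  then show ?thesis
    using l2s_add(2)[OF D(2) L(1)] D(3) L(2) w by (simp add: power3_eq_cube ac_simps)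
qed

section \<open>Continuity in time\<close>

lemma CT_l2s_in_l2s: "w \<in> CT_l2s T s \<Longrightarrow> t \<in> {0..T} \<Longrightarrow> in_l2s s (w t)"
  unfolding CT_l2s_def by auto

lemma CT_l2s_tendsto:
  "w \<in> CT_l2s T s \<Longrightarrow> t \<in> {0..T} \<Longrightarrow>
    ((\<lambda>t'. l2s_norm s (\<lambda>n. w t' n - w t n)) \<longlongrightarrow> 0) (at t within {0..T})"
  unfolding CT_l2s_def by auto

lemma eventually_at_within_of_all: "(\<And>x. x \<in> S \<Longrightarrow> P x) \<Longrightarrow> eventually P (at t within S)"
  unfolding eventually_at_filter by (auto intro: always_eventually)

lemma continuous_on_l2s_norm_CT:
  assumes w: "w \<in> CT_l2s T s"
  shows "continuous_on {0..T} (\<lambda>t. l2s_norm s (w t))"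
  unfolding continuous_on_def
proof
  fix t assume t: "t \<in> {0..T}"
  have "((\<lambda>t'. l2s_norm s (w t') - l2s_norm s (w t)) \<longlongrightarrow> 0) (at t within {0..T})"
  proof (rule Lim_null_comparison[OF _ CT_l2s_tendsto[OF w t]])
    show "\<forall>\<^sub>F x in at t within {0..T}.
        norm (l2s_norm s (w x) - l2s_norm s (w t)) \<le> l2s_norm s (\<lambda>n. w x n - w t n)"
      by (rule eventually_at_within_of_all)
         (use abs_l2s_norm_diff_le CT_l2s_in_l2s[OF w] t in auto)
  qed
  then show "((\<lambda>t. l2s_norm s (w t)) \<longlongrightarrow> l2s_norm s (w t)) (at t within {0..T})"
    by (subst Lim_null) simp
qed

lemma l2s_norm_le_CT_norm:
  assumes "w \<in> CT_l2s T s" "t \<in> {0..T}"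
  shows "l2s_norm s (w t) \<le> CT_norm T s w"
proof -
  have "bdd_above ((\<lambda>t. l2s_norm s (w t)) ` {0..T})"
    using continuous_on_l2s_norm_CT[OF assms(1)]
    by (intro bounded_imp_bdd_above compact_imp_bounded compact_continuous_image) auto
  then show ?thesis
    unfolding CT_norm_def by (rule cSUP_upper[OF assms(2)])
qed

lemma CT_norm_le:
  assumes "T \<ge> 0" and "\<And>t. t \<in> {0..T} \<Longrightarrow> l2s_norm s (w t) \<le> B"
  shows "CT_norm T s w \<le> B"
  unfolding CT_norm_def using assms by (intro cSUP_least) auto

lemma CT_l2s_diff:
  assumes w: "w \<in> CT_l2s T s" and v: "v \<in> CT_l2s T s"
  shows "(\<lambda>t n. w t n - v t n) \<in> CT_l2s T s"
  unfolding CT_l2s_def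
proof (intro CollectI conjI ballI)
  fix t assume t: "t \<in> {0..T}"
  show "in_l2s s (\<lambda>n. w t n - v t n)"
    using l2s_diff(1) CT_l2s_in_l2s[OF w t] CT_l2s_in_l2s[OF v t] .
  have "((\<lambda>t'. l2s_norm s (\<lambda>n. w t' n - w t n) + l2s_norm s (\<lambda>n. v t' n - v t n)) \<longlongrightarrow> 0 + 0)
      (at t within {0..T})"
    by (intro tendsto_add CT_l2s_tendsto[OF w t] CT_l2s_tendsto[OF v t])
  then have lim: "((\<lambda>t'. l2s_norm s (\<lambda>n. w t' n - w t n) + l2s_norm s (\<lambda>n. v t' n - v t n)) \<longlongrightarrow> 0)
      (at t within {0..T})"
    by simp
  show "((\<lambda>t'. l2s_norm s (\<lambda>n. (w t' n - v t' n) - (w t n - v t n))) \<longlongrightarrow> 0) (at t within {0..T})"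
  proof (rule Lim_null_comparison[OF _ lim])
    have "l2s_norm s (\<lambda>n. (w x n - v x n) - (w t n - v t n))
        \<le> l2s_norm s (\<lambda>n. w x n - w t n) + l2s_norm s (\<lambda>n. v x n - v t n)" if x: "x \<in> {0..T}" for x
    proof -
      have "(\<lambda>n. (w x n - v x n) - (w t n - v t n)) = (\<lambda>n. (w x n - w t n) - (v x n - v t n))"
        by (auto simp: algebra_simps)
      then show ?thesis
        using l2s_diff(2)[OF l2s_diff(1)[OF CT_l2s_in_l2s[OF w x] CT_l2s_in_l2s[OF w t]]
            l2s_diff(1)[OF CT_l2s_in_l2s[OF v x] CT_l2s_in_l2s[OF v t]]]
        by simp
    qed
    then show "\<forall>\<^sub>F x in at t within {0..T}. norm (l2s_norm s (\<lambda>n. (w x n - v x n) - (w t n - v t n)))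
        \<le> l2s_norm s (\<lambda>n. w x n - w t n) + l2s_norm s (\<lambda>n. v x n - v t n)"
      by (intro eventually_at_within_of_all) (simp add: l2s_norm_nonneg)
  qed
qed

lemma CT_l2s_tendsto_of_bound:
  assumes w: "w \<in> CT_l2s T s" and t: "t \<in> {0..T}" and \<gamma>: "\<gamma> > 0"
    and bound: "\<And>x. x \<in> {0..T} \<Longrightarrow> l2s_norm s (\<lambda>n. F x n - F t n)
                  \<le> \<bar>x - t\<bar> powr \<gamma> * K1 + K2 * l2s_norm s (\<lambda>n. w x n - w t n)"
  shows "((\<lambda>x. l2s_norm s (\<lambda>n. F x n - F t n)) \<longlongrightarrow> 0) (at t within {0..T})"
proof (rule Lim_null_comparison)
  have "((\<lambda>x. \<bar>x - t\<bar>) \<longlongrightarrow> 0) (at t within {0..T})"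
    using tendsto_rabs[OF tendsto_diff[OF tendsto_ident_at[of t "{0..T}"] tendsto_const[of t]]] by simp
  then have "((\<lambda>x. \<bar>x - t\<bar> powr \<gamma>) \<longlongrightarrow> 0) (at t within {0..T})"
    by (rule tendsto_zero_powrI) (use \<gamma> in auto)
  then show "((\<lambda>x. \<bar>x - t\<bar> powr \<gamma> * K1 + K2 * l2s_norm s (\<lambda>n. w x n - w t n)) \<longlongrightarrow> 0)
      (at t within {0..T})"
    using tendsto_add[OF tendsto_mult_left_zero tendsto_mult_right_zero[OF CT_l2s_tendsto[OF w t]]]
    by simp
  show "\<forall>\<^sub>F x in at t within {0..T}. norm (l2s_norm s (\<lambda>n. F x n - F t n))
      \<le> \<bar>x - t\<bar> powr \<gamma> * K1 + K2 * l2s_norm s (\<lambda>n. w x n - w t n)"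
    by (rule eventually_at_within_of_all) (simp add: l2s_norm_nonneg bound)
qed

lemma N0_in_CT_l2s:
  assumes s: "s > 0" and M: "M \<ge> 1" and w: "w \<in> CT_l2s T s"
  shows "N0 M w \<in> CT_l2s T s"
  unfolding CT_l2s_def
proof (intro CollectI conjI ballI)
  fix t assume t: "t \<in> {0..T}"
  show "in_l2s s (N0 M w t)"
    using N0_l2s_bound(1)[where w=w and t=t, OF s M CT_l2s_in_l2s[OF w t]] .
  let ?C = "trilin_const s" and ?B = "CT_norm T s w" and ?\<gamma> = "gain_exp s"
  have B: "0 \<le> l2s_norm s (w x)" "l2s_norm s (w x) \<le> ?B" if "x \<in> {0..T}" for x
    using l2s_norm_le_CT_norm[OF w that] by (simp_all add: l2s_norm_nonneg)
  show "((\<lambda>t'. l2s_norm s (\<lambda>n. N0 M w t' n - N0 M w t n)) \<longlongrightarrow> 0) (at t within {0..T})"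
  proof (rule CT_l2s_tendsto_of_bound[OF w t gain_exp_pos[OF s]])
    fix x assume x: "x \<in> {0..T}"
    have "l2s_norm s (\<lambda>n. N0 M w x n - N0 M w t n)
        \<le> 2 * \<bar>x - t\<bar> powr ?\<gamma> * ?C * (l2s_norm s (w x))^3
          + M powr (- ?\<gamma>) * (2 * ?C) * ((l2s_norm s (w x))\<^sup>2 + (l2s_norm s (w t))\<^sup>2)
            * l2s_norm s (\<lambda>k. w x k - w t k)"
      using N0_l2s_time_diff[where w=w and t=x and t'=t, OF s M CT_l2s_in_l2s[OF w x] CT_l2s_in_l2s[OF w t]] .
    also have "\<dots> \<le> \<bar>x - t\<bar> powr ?\<gamma> * (2 * ?C * ?B^3)
          + M powr (- ?\<gamma>) * (2 * ?C) * (?B\<^sup>2 + ?B\<^sup>2) * l2s_norm s (\<lambda>k. w x k - w t k)"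
    proof (rule add_mono)
      have "(2 * ?C * \<bar>x - t\<bar> powr ?\<gamma>) * (l2s_norm s (w x))^3 \<le> (2 * ?C * \<bar>x - t\<bar> powr ?\<gamma>) * ?B^3"
        using B[OF x] trilin_const_nonneg[of s] by (intro mult_left_mono power_mono) auto
      then show "2 * \<bar>x - t\<bar> powr ?\<gamma> * ?C * (l2s_norm s (w x))^3 \<le> \<bar>x - t\<bar> powr ?\<gamma> * (2 * ?C * ?B^3)"
        by (simp add: ac_simps)
    qed (use B[OF x] B[OF t] trilin_const_nonneg[of s] l2s_norm_nonneg in
          \<open>intro mult_right_mono mult_left_mono add_mono power_mono, auto\<close>)
    finally show "l2s_norm s (\<lambda>n. N0 M w x n - N0 M w t n)
        \<le> \<bar>x - t\<bar> powr ?\<gamma> * (2 * ?C * ?B^3)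
          + M powr (- ?\<gamma>) * (2 * ?C) * (?B\<^sup>2 + ?B\<^sup>2) * l2s_norm s (\<lambda>n. w x n - w t n)" .
  qed
qed

lemma CT_norm_N0_le:
  assumes s: "s > 0" and M: "M \<ge> 1" and T: "T \<ge> 0" and w: "w \<in> CT_l2s T s"
  shows "CT_norm T s (N0 M w) \<le> M powr (- gain_exp s) * trilin_const s * (CT_norm T s w)^3"
proof (rule CT_norm_le[OF T])
  fix t assume t: "t \<in> {0..T}"
  have "l2s_norm s (N0 M w t) \<le> M powr (- gain_exp s) * trilin_const s * (l2s_norm s (w t))^3"
    by (rule N0_l2s_bound(2)[where w=w and t=t, OF s M CT_l2s_in_l2s[OF w t]])
  also have "\<dots> \<le> M powr (- gain_exp s) * trilin_const s * (CT_norm T s w)^3"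
    using l2s_norm_le_CT_norm[OF w t] trilin_const_nonneg[of s]
    by (intro mult_left_mono power_mono) (simp_all add: l2s_norm_nonneg)
  finally show "l2s_norm s (N0 M w t) \<le> M powr (- gain_exp s) * trilin_const s * (CT_norm T s w)^3" .
qed

lemma CT_norm_N0_diff_le:
  assumes s: "s > 0" and M: "M \<ge> 1" and T: "T \<ge> 0"
    and w: "w \<in> CT_l2s T s" and w': "w' \<in> CT_l2s T s"
  shows "CT_norm T s (\<lambda>t n. N0 M w t n - N0 M w' t n)
    \<le> M powr (- gain_exp s) * (2 * trilin_const s) * ((CT_norm T s w)\<^sup>2 + (CT_norm T s w')\<^sup>2)
        * CT_norm T s (\<lambda>t n. w t n - w' t n)"
proof (rule CT_norm_le[OF T])
  fix t assume t: "t \<in> {0..T}"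
  have "l2s_norm s (\<lambda>n. N0 M w t n - N0 M w' t n)
      \<le> M powr (- gain_exp s) * (2 * trilin_const s)
          * ((l2s_norm s (w t))\<^sup>2 + (l2s_norm s (w' t))\<^sup>2) * l2s_norm s (\<lambda>k. w t k - w' t k)"
    by (rule N0_l2s_lipschitz(2)[where w=w and w'=w' and t=t,
          OF s M CT_l2s_in_l2s[OF w t] CT_l2s_in_l2s[OF w' t]])
  also have "\<dots> \<le> M powr (- gain_exp s) * (2 * trilin_const s)
      * ((CT_norm T s w)\<^sup>2 + (CT_norm T s w')\<^sup>2) * CT_norm T s (\<lambda>t n. w t n - w' t n)"
    using l2s_norm_le_CT_norm[OF w t] l2s_norm_le_CT_norm[OF w' t]
      l2s_norm_le_CT_norm[OF CT_l2s_diff[OF w w'] t] trilin_const_nonneg[of s]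
    by (intro mult_mono mult_left_mono add_mono power_mono) (simp_all add: l2s_norm_nonneg)
  finally show "l2s_norm s (\<lambda>n. N0 M w t n - N0 M w' t n)
      \<le> M powr (- gain_exp s) * (2 * trilin_const s) * ((CT_norm T s w)\<^sup>2 + (CT_norm T s w')\<^sup>2)
          * CT_norm T s (\<lambda>t n. w t n - w' t n)" .
qed

theorem lemma3p4:
  fixes s :: real
  assumes "s > 0"
  shows "\<exists>\<delta>>0. \<exists>C::real. \<forall>(M::real) (T::real) w w'.
     M \<ge> 1 \<and> T > 0 \<and> w \<in> CT_l2s T s \<and> w' \<in> CT_l2s T s \<longrightarrow>
       N0 M w \<in> CT_l2s T s \<and>
       CT_norm T s (N0 M w) \<le> C * M powr (-\<delta>) * (CT_norm T s w) ^ 3 \<and>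
       CT_norm T s (\<lambda>t n. N0 M w t n - N0 M w' t n)
         \<le> C * M powr (-\<delta>) * ((CT_norm T s w)\<^sup>2 + (CT_norm T s w')\<^sup>2)
             * CT_norm T s (\<lambda>t n. w t n - w' t n)"
proof (rule exI[of _ "gain_exp s"], intro conjI exI[of _ "2 * trilin_const s"] allI impI)
  show "gain_exp s > 0"
    using gain_exp_pos[OF assms] .
  fix M T :: real and w w' :: "real \<Rightarrow> int \<Rightarrow> complex"
  assume "M \<ge> 1 \<and> T > 0 \<and> w \<in> CT_l2s T s \<and> w' \<in> CT_l2s T s"
  then have M: "M \<ge> 1" and T: "T \<ge> 0" and w: "w \<in> CT_l2s T s" and w': "w' \<in> CT_l2s T s"
    by auto
  show "N0 M w \<in> CT_l2s T s"
    using N0_in_CT_l2s[OF assms M w] .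
  have "CT_norm T s (N0 M w) \<le> M powr (- gain_exp s) * trilin_const s * (CT_norm T s w)^3"
    using CT_norm_N0_le[OF assms M T w] .
  also have "\<dots> \<le> 2 * trilin_const s * M powr (- gain_exp s) * (CT_norm T s w)^3"
    using l2s_norm_le_CT_norm[OF w, of 0] T trilin_const_nonneg[of s] l2s_norm_nonneg[of s "w 0"]
    by (simp add: mult_right_mono)
  finally show "CT_norm T s (N0 M w) \<le> 2 * trilin_const s * M powr (- gain_exp s) * (CT_norm T s w)^3" .
  show "CT_norm T s (\<lambda>t n. N0 M w t n - N0 M w' t n)
      \<le> 2 * trilin_const s * M powr (- gain_exp s) * ((CT_norm T s w)\<^sup>2 + (CT_norm T s w')\<^sup>2)
          * CT_norm T s (\<lambda>t n. w t n - w' t n)"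
    using CT_norm_N0_diff_le[OF assms M T w w'] by (simp add: ac_simps)
qed

end
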